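(* Let $A$ be a unital C*-algebra, $\sigma$ a flow on $A$, $\beta\in\mathbb{R}$, and $C\subseteq\mathcal{Z}(A)$ a unital C*-subalgebra of the center of $A$, identified with $C(\Omega(C))$ via the Gelfand transform. Let $K_\beta$ be the set of all $(\sigma,\beta)$-KMS states on $A$ and, for $x\in\Omega(C)$, let $J_x=\{a\in C: a(x)=0\}$ and $K_\beta^x=\{\varphi\in K_\beta:\varphi|_{J_x}=0\}$. Then $$\mathrm{Ext}(K_\beta)=\bigsqcup_{x\in\Omega(C)}\mathrm{Ext}(K_\beta^x).$$ Moreover, if there is a $(\sigma,\beta)$-KMS state on $A$ whose restriction to $C$ is faithful, then $K_\beta^x\neq\emptyset$ for every $x\in\Omega(C)$; in particular, in this case $|\mathrm{Ext}(K_\beta)|\ge|\Omega(C)|$.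
   Context: A flow on $A$ is a strongly continuous action $\sigma$ of $\mathbb{R}$ on $A$ by $^*$-automorphisms. $b$ is analytic if $t\mapsto\sigma_t(b)$ extends to an entire map $z\mapsto\sigma_z(b)$; a state $\varphi$ is $(\sigma,\beta)$-KMS if $\varphi(a\sigma_{i\beta}(b))=\varphi(ba)$ for all $a\in A$ and all analytic $b$. $\Omega(C)$ is the spectrum (character space) of $C$. $\mathrm{Ext}(K)$ denotes the set of extreme points of a convex set $K$. *)

theory Defs
  imports "HOL-Analysis.Analysis"
begin

class complex_banach_algebra_1 = real_normed_algebra_1 + banach +
  fixes cscale :: "complex \<Rightarrow> 'a \<Rightarrow> 'a"
  assumes cscale_of_real: "cscale (complex_of_real r) a = r *\<^sub>R a"
    and cscale_add_right: "cscale c (a + b) = cscale c a + cscale c b"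
    and cscale_add_left: "cscale (c + d) a = cscale c a + cscale d a"
    and cscale_cscale: "cscale c (cscale d a) = cscale (c * d) a"
    and cscale_mult_left: "cscale c a * b = cscale c (a * b)"
    and cscale_mult_right: "a * cscale c b = cscale c (a * b)"
    and norm_cscale: "norm (cscale c a) = cmod c * norm a"

class cstar_algebra_1 = complex_banach_algebra_1 +
  fixes cstar :: "'a \<Rightarrow> 'a"
  assumes cstar_cstar: "cstar (cstar a) = a"
    and cstar_add: "cstar (a + b) = cstar a + cstar b"
    and cstar_cscale: "cstar (cscale c a) = cscale (cnj c) (cstar a)"
    and cstar_mult: "cstar (a * b) = cstar b * cstar a"
    and cstar_identity: "norm (cstar a * a) = norm a ^ 2"

definition star_automorphism :: "('a::cstar_algebra_1 \<Rightarrow> 'a) \<Rightarrow> bool" where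
  "star_automorphism f \<longleftrightarrow> bij f \<and>
     (\<forall>a b. f (a + b) = f a + f b) \<and>
     (\<forall>c a. f (cscale c a) = cscale c (f a)) \<and>
     (\<forall>a b. f (a * b) = f a * f b) \<and>
     (\<forall>a. f (cstar a) = cstar (f a))"

definition is_flow :: "(real \<Rightarrow> 'a::cstar_algebra_1 \<Rightarrow> 'a) \<Rightarrow> bool" where
  "is_flow \<sigma> \<longleftrightarrow> (\<forall>t. star_automorphism (\<sigma> t)) \<and>
     \<sigma> 0 = id \<and> (\<forall>s t. \<sigma> (s + t) = \<sigma> s \<circ> \<sigma> t) \<and>
     (\<forall>a. continuous_on UNIV (\<lambda>t. \<sigma> t a))"

definition entire_map :: "(complex \<Rightarrow> 'a::cstar_algebra_1) \<Rightarrow> bool" where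
  "entire_map F \<longleftrightarrow> (\<forall>z. \<exists>d. (F has_derivative (\<lambda>h. cscale h d)) (at z))"

definition analytic_extension :: "(real \<Rightarrow> 'a::cstar_algebra_1 \<Rightarrow> 'a) \<Rightarrow> 'a \<Rightarrow> (complex \<Rightarrow> 'a) \<Rightarrow> bool" where
  "analytic_extension \<sigma> b F \<longleftrightarrow> entire_map F \<and> (\<forall>t. F (complex_of_real t) = \<sigma> t b)"

definition analytic_elem :: "(real \<Rightarrow> 'a::cstar_algebra_1 \<Rightarrow> 'a) \<Rightarrow> 'a \<Rightarrow> bool" where
  "analytic_elem \<sigma> b \<longleftrightarrow> (\<exists>F. analytic_extension \<sigma> b F)"

definition is_state :: "('a::cstar_algebra_1 \<Rightarrow> complex) \<Rightarrow> bool" where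
  "is_state \<phi> \<longleftrightarrow> (\<forall>a b. \<phi> (a + b) = \<phi> a + \<phi> b) \<and>
     (\<forall>c a. \<phi> (cscale c a) = c * \<phi> a) \<and>
     (\<forall>a. Im (\<phi> (cstar a * a)) = 0 \<and> Re (\<phi> (cstar a * a)) \<ge> 0) \<and>
     \<phi> 1 = 1"

text \<open>The set K_\<beta> of (\<sigma>,\<beta>)-KMS states. Since the entire extension is unique,
  quantifying over all extensions F is the same as using \<sigma>_{i\<beta>}(b) = F(i\<beta>).\<close>
definition KMS_states :: "(real \<Rightarrow> 'a::cstar_algebra_1 \<Rightarrow> 'a) \<Rightarrow> real \<Rightarrow> ('a \<Rightarrow> complex) set" where
  "KMS_states \<sigma> \<beta> = {\<phi>. is_state \<phi> \<and>
     (\<forall>a b F. analytic_extension \<sigma> b F \<longrightarrow>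
        \<phi> (a * F (\<i> * complex_of_real \<beta>)) = \<phi> (b * a))}"

definition center :: "'a::cstar_algebra_1 set" where
  "center = {a. \<forall>b. a * b = b * a}"

definition unital_cstar_subalgebra :: "'a::cstar_algebra_1 set \<Rightarrow> bool" where
  "unital_cstar_subalgebra C \<longleftrightarrow> 1 \<in> C \<and> closed C \<and>
     (\<forall>a\<in>C. \<forall>b\<in>C. a + b \<in> C \<and> a * b \<in> C) \<and>
     (\<forall>c. \<forall>a\<in>C. cscale c a \<in> C) \<and>
     (\<forall>a\<in>C. cstar a \<in> C)"

text \<open>The spectrum \<Omega>(C): nonzero multiplicative complex-linear functionals on C,
  represented extensionally (value 0 outside C). Under the Gelfand transform,
  a(x) = x a.\<close>
definition Omega :: "'a::cstar_algebra_1 set \<Rightarrow> ('a \<Rightarrow> complex) set" where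
  "Omega C = {\<omega>. (\<forall>a\<in>C. \<forall>b\<in>C. \<omega> (a + b) = \<omega> a + \<omega> b \<and> \<omega> (a * b) = \<omega> a * \<omega> b) \<and>
     (\<forall>c. \<forall>a\<in>C. \<omega> (cscale c a) = c * \<omega> a) \<and>
     \<omega> 1 = 1 \<and> (\<forall>a. a \<notin> C \<longrightarrow> \<omega> a = 0)}"

definition J_ideal :: "'a::cstar_algebra_1 set \<Rightarrow> ('a \<Rightarrow> complex) \<Rightarrow> 'a set" where
  "J_ideal C x = {a \<in> C. x a = 0}"

definition KMS_states_at :: "(real \<Rightarrow> 'a::cstar_algebra_1 \<Rightarrow> 'a) \<Rightarrow> real \<Rightarrow> 'a set \<Rightarrow> ('a \<Rightarrow> complex) \<Rightarrow> ('a \<Rightarrow> complex) set" where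
  "KMS_states_at \<sigma> \<beta> C x = {\<phi> \<in> KMS_states \<sigma> \<beta>. \<forall>a\<in>J_ideal C x. \<phi> a = 0}"

definition Ext :: "('a \<Rightarrow> complex) set \<Rightarrow> ('a \<Rightarrow> complex) set" where
  "Ext K = {\<phi> \<in> K. \<forall>\<psi>1\<in>K. \<forall>\<psi>2\<in>K. \<forall>t::real. 0 < t \<and> t < 1 \<and>
      \<phi> = (\<lambda>a. complex_of_real t * \<psi>1 a + complex_of_real (1 - t) * \<psi>2 a) \<longrightarrow> \<psi>1 = \<psi>2}"

definition faithful_on :: "'a::cstar_algebra_1 set \<Rightarrow> ('a \<Rightarrow> complex) \<Rightarrow> bool" where
  "faithful_on C \<phi> \<longleftrightarrow> (\<forall>c\<in>C. \<phi> (cstar c * c) = 0 \<longrightarrow> c = 0)"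

end

theory Submission
  imports Defs "HOL-Computational_Algebra.Formal_Power_Series"
begin

text \<open>An extreme KMS state \<open>\<phi>\<close> is multiplicative on the center: for central self-adjoint \<open>h\<close>
  with \<open>\<parallel>h\<parallel> < 1\<close>, reweighting \<open>\<phi>\<close> by \<open>1 + h\<close> and by \<open>1 - h\<close> gives two KMS states of which \<open>\<phi>\<close> is a
  proper convex combination, so both coincide with \<open>\<phi>\<close>.  Hence \<open>\<phi>\<close> restricts to a character \<open>x\<close>
  of \<open>C\<close> and lies in \<open>K\<^sub>\<beta>\<^sup>x\<close>.  Conversely each \<open>K\<^sub>\<beta>\<^sup>x\<close> is a face of \<open>K\<^sub>\<beta>\<close> (a state killing \<open>a\<^sup>* a\<close>
  kills \<open>a\<close>), and a state in \<open>K\<^sub>\<beta>\<^sup>x\<close> agrees with \<open>x\<close> on \<open>C\<close>, so the faces are disjoint.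

  If \<open>\<phi>\<close> is faithful on \<open>C\<close>, \<open>c \<in> J\<^sub>x\<close> is positive and \<open>\<epsilon> > 0\<close>, reweighting \<open>\<phi>\<close> by the square of the
  positive part of \<open>\<epsilon> - c\<close> (nonzero, since it does not vanish at \<open>x\<close>) gives a KMS state \<open>\<psi>\<close> with
  \<open>\<psi>(c) \<le> \<epsilon>\<close>.  Compactness of \<open>K\<^sub>\<beta>\<close> in the product topology turns these approximate solutions
  into a KMS state vanishing on \<open>J\<^sub>x\<close>, and a Zorn argument on closed faces (Krein-Milman) gives
  an extreme point of \<open>K\<^sub>\<beta>\<^sup>x\<close>.  Square roots are built from the binomial series of \<open>\<surd>(1 - u)\<close>.\<close>

lemma cscale_zero_left [simp]: "cscale 0 (a::'a::complex_banach_algebra_1) = 0"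
  using cscale_of_real[of 0 a] by simp

lemma cscale_one [simp]: "cscale 1 (a::'a::complex_banach_algebra_1) = a"
  using cscale_of_real[of 1 a] by simp

lemma cscale_zero_right [simp]: "cscale c (0::'a::complex_banach_algebra_1) = 0"
  using cscale_add_right[of c 0 0] by simp

lemma cscale_minus_left: "cscale (- c) (a::'a::complex_banach_algebra_1) = - cscale c a"
  using cscale_add_left[of c "-c" a] by (simp add: eq_neg_iff_add_eq_0 add.commute)

lemma cscale_minus_right: "cscale c (- a::'a::complex_banach_algebra_1) = - cscale c a"
  using cscale_add_right[of c a "-a"] by (simp add: eq_neg_iff_add_eq_0 add.commute)

lemma cscale_diff_right: "cscale c (a - b::'a::complex_banach_algebra_1) = cscale c a - cscale c b"
  using cscale_add_right[of c a "-b"] by (simp add: cscale_minus_right)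

lemma cstar_zero [simp]: "cstar (0::'a::cstar_algebra_1) = 0"
  using cstar_add[of 0 0] by simp

lemma cstar_minus: "cstar (- a::'a::cstar_algebra_1) = - cstar a"
  using cstar_add[of a "-a"] by (simp add: eq_neg_iff_add_eq_0 add.commute)

lemma cstar_diff: "cstar (a - b::'a::cstar_algebra_1) = cstar a - cstar b"
  using cstar_add[of a "-b"] by (simp add: cstar_minus)

lemma cstar_scaleR: "cstar (r *\<^sub>R a::'a::cstar_algebra_1) = r *\<^sub>R cstar a"
  using cstar_cscale[of "of_real r" a] by (simp add: cscale_of_real)

lemma cstar_one [simp]: "cstar (1::'a::cstar_algebra_1) = 1"
  using cstar_mult[of "cstar 1" "1::'a"] by (simp add: cstar_cstar)

lemma cstar_power: "cstar ((a::'a::cstar_algebra_1) ^ n) = cstar a ^ n"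
  by (induction n) (auto simp: cstar_mult power_commutes)

lemma cstar_sum: "cstar (sum f A) = (\<Sum>i\<in>A. cstar (f i::'a::cstar_algebra_1))"
  by (induction A rule: infinite_finite_induct) (auto simp: cstar_add)

lemma norm_cstar [simp]: "norm (cstar a) = norm (a::'a::cstar_algebra_1)"
proof -
  have "norm b \<le> norm (cstar b)" for b :: 'a
  proof -
    have "norm b * norm b \<le> norm (cstar b) * norm b"
      using cstar_identity[of b] norm_mult_ineq[of "cstar b" b] by (simp add: power2_eq_square)
    then show ?thesis
      by (cases "b = 0") simp_all
  qed
  from this[of a] this[of "cstar a"] show ?thesis
    by (simp add: cstar_cstar)
qed

lemma bounded_linear_cstar: "bounded_linear (cstar :: 'a::cstar_algebra_1 \<Rightarrow> 'a)"
  by (rule bounded_linear_intro[where K=1]) (auto simp: cstar_add cstar_scaleR)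

lemma cstar_suminf: "summable f \<Longrightarrow> cstar (suminf f) = (\<Sum>n. cstar (f n::'a::cstar_algebra_1))"
  using bounded_linear.suminf[OF bounded_linear_cstar] by blast

lemma selfadjoint_decomposition:
  fixes a :: "'a::cstar_algebra_1"
  defines "h \<equiv> (1/2::real) *\<^sub>R (a + cstar a)" and "k \<equiv> cscale (- \<i> / 2) (a - cstar a)"
  shows "a = h + cscale \<i> k" "cstar h = h" "cstar k = k" "norm h \<le> norm a" "norm k \<le> norm a"
proof -
  have "cscale \<i> k = (1/2::real) *\<^sub>R (a - cstar a)"
    unfolding k_def cscale_cscale by (simp flip: cscale_of_real)
  moreover have "(1/2::real) *\<^sub>R (a + cstar a) + (1/2::real) *\<^sub>R (a - cstar a) = a"
    by (simp add: scaleR_add_right scaleR_diff_right flip: scaleR_add_left)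
  ultimately show "a = h + cscale \<i> k" unfolding h_def by simp
  show "cstar h = h" by (simp add: h_def cstar_scaleR cstar_add cstar_cstar add.commute)
  show "cstar k = k"
    by (simp add: k_def cstar_cscale cstar_diff cstar_cstar cscale_diff_right cscale_minus_left)
  have "norm (a + cstar a) \<le> 2 * norm a" using norm_triangle_ineq[of a "cstar a"] by simp
  thus "norm h \<le> norm a" by (simp add: h_def)
  have "norm (a - cstar a) \<le> 2 * norm a" using norm_triangle_ineq4[of a "cstar a"] by simp
  thus "norm k \<le> norm a" by (simp add: k_def norm_cscale norm_divide)
qed

lemma one_minus_mult_suminf_power:
  fixes b :: "'a::{real_normed_algebra_1,banach}"
  assumes "norm b < 1"
  shows "(1 - b) * (\<Sum>n. b ^ n) = 1"
proof -
  have "(\<lambda>n. b ^ n - b ^ Suc n) sums (b ^ 0 - 0)"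
    by (rule telescope_sums'[OF LIMSEQ_power_zero[OF assms]])
  moreover have "(\<lambda>n. (1 - b) * b ^ n) = (\<lambda>n. b ^ n - b ^ Suc n)"
    by (simp add: algebra_simps)
  ultimately show ?thesis
    using suminf_mult[OF complete_algebra_summable_geometric[OF assms], of "1 - b"]
    by (simp add: sums_iff)
qed

section \<open>Square roots of \<open>1 - u\<close> by the binomial series\<close>

definition sqrt_coeff :: "nat \<Rightarrow> real" where
  "sqrt_coeff n = ((1/2) gchoose n) * (-1) ^ n"

definition sqrt_one_minus :: "'a::{real_normed_algebra_1,banach} \<Rightarrow> 'a" where
  "sqrt_one_minus u = (\<Sum>n. sqrt_coeff n *\<^sub>R u ^ n)"

lemma sqrt_coeff_0 [simp]: "sqrt_coeff 0 = 1"
  by (simp add: sqrt_coeff_def)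

lemma sqrt_coeff_nonpos:
  assumes "n \<ge> 1"
  shows "sqrt_coeff n \<le> 0"
proof -
  obtain m where n: "n = Suc m" using assms by (cases n) auto
  have "((1/2::real) gchoose n) = (-1)^n * ((of_nat n - 1/2 - 1) gchoose n)"
    by (rule gbinomial_negated_upper)
  hence "sqrt_coeff n = ((of_nat n - 1/2 - 1) gchoose n)"
    by (simp add: sqrt_coeff_def power_mult_distrib[symmetric] flip: power_add mult_2)
  also have "\<dots> = (\<Prod>i=0..<n. (of_nat n - 1/2 - 1) - of_nat i) / fact n"
    by (simp add: gbinomial_prod_rev)
  also have "(\<Prod>i=0..<n. (of_nat n - 1/2 - 1::real) - of_nat i)
      = - (1/2) * (\<Prod>i=0..<m. (of_nat n - 1/2 - 1) - of_nat i)"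
    by (simp add: n)
  finally have eq: "sqrt_coeff n = - (1/2) * (\<Prod>i=0..<m. (of_nat n - 1/2 - 1::real) - of_nat i) / fact n" .
  have "(\<Prod>i=0..<m. (of_nat n - 1/2 - 1::real) - of_nat i) \<ge> 0"
    by (rule prod_nonneg) (auto simp: n)
  thus ?thesis unfolding eq by (simp add: divide_nonpos_pos)
qed

lemma sum_sqrt_coeff_nonneg: "(\<Sum>k\<le>m. sqrt_coeff k) \<ge> 0"
proof -
  have "(\<Sum>k\<le>m. sqrt_coeff k) = (- 1) ^ m * ((1/2::real) - 1 gchoose m)"
    unfolding sqrt_coeff_def by (rule gbinomial_sum_lower_neg)
  also have "((1/2::real) - 1 gchoose m) = (-1)^m * ((of_nat m - (1/2 - 1) - 1) gchoose m)"
    by (rule gbinomial_negated_upper)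
  finally have "(\<Sum>k\<le>m. sqrt_coeff k) = ((of_nat m - 1/2) gchoose m)"
    by (simp add: power_mult_distrib[symmetric])
  also have "\<dots> = (\<Prod>i=0..<m. (of_nat m - 1/2) - of_nat i) / fact m"
    by (simp add: gbinomial_prod_rev)
  also have "\<dots> \<ge> 0"
    by (rule divide_nonneg_pos, rule prod_nonneg) auto
  finally show ?thesis .
qed

text \<open>All coefficients but the first are \<open>\<le> 0\<close>, so the absolute partial sums are
  controlled by the (nonnegative) signed ones.\<close>

lemma sum_abs_sqrt_coeff: "(\<Sum>k\<le>m. \<bar>sqrt_coeff k\<bar>) = 2 - (\<Sum>k\<le>m. sqrt_coeff k)"
  by (induction m) (simp_all add: sqrt_coeff_nonpos)

lemma summable_abs_sqrt_coeff: "summable (\<lambda>n. \<bar>sqrt_coeff n\<bar>)"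
  by (rule bounded_imp_summable[where B=2]) (simp_all add: sum_abs_sqrt_coeff sum_sqrt_coeff_nonneg)

lemma suminf_abs_sqrt_coeff_Suc_le: "(\<Sum>n. \<bar>sqrt_coeff (Suc n)\<bar>) \<le> 1"
proof -
  have "(\<Sum>n. \<bar>sqrt_coeff n\<bar>) \<le> 2"
  proof (rule suminf_le_const[OF summable_abs_sqrt_coeff])
    fix n
    have "(\<Sum>k<n. \<bar>sqrt_coeff k\<bar>) \<le> (\<Sum>k\<le>n. \<bar>sqrt_coeff k\<bar>)"
      by (rule sum_mono2) auto
    then show "(\<Sum>k<n. \<bar>sqrt_coeff k\<bar>) \<le> 2"
      using sum_abs_sqrt_coeff[of n] sum_sqrt_coeff_nonneg[of n] by linarith
  qed
  then show ?thesis
    using suminf_split_head[OF summable_abs_sqrt_coeff] by simp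
qed

lemma sqrt_coeff_convolution:
  "(\<Sum>i\<le>k. sqrt_coeff i * sqrt_coeff (k - i)) = (-1)^k * of_nat (1 choose k)"
proof -
  have "sqrt_coeff i * sqrt_coeff (k - i) = (-1)^k * (((1/2::real) gchoose i) * ((1/2) gchoose (k - i)))"
    if "i \<le> k" for i
  proof -
    have "sqrt_coeff i * sqrt_coeff (k - i)
        = (((1/2::real) gchoose i) * ((1/2) gchoose (k - i))) * ((-1)^i * (-1)^(k-i))"
      by (simp only: sqrt_coeff_def ac_simps)
    also have "(-1::real)^i * (-1)^(k-i) = (-1)^k"
      using that by (simp flip: power_add)
    finally show ?thesis by (simp only: ac_simps)
  qed
  then have "(\<Sum>i\<le>k. sqrt_coeff i * sqrt_coeff (k - i))
      = (-1)^k * (\<Sum>i\<le>k. ((1/2::real) gchoose i) * ((1/2) gchoose (k - i)))"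
    by (simp add: sum_distrib_left)
  also have "\<dots> = (-1)^k * ((1/2 + 1/2::real) gchoose k)"
    by (simp only: gbinomial_Vandermonde atMost_atLeast0)
  also have "((1/2 + 1/2::real) gchoose k) = of_nat (1 choose k)"
    using binomial_gbinomial[of 1 k, where 'a=real] by simp
  finally show ?thesis .
qed

lemma norm_power_le_one:
  fixes u :: "'a::real_normed_algebra_1"
  assumes "norm u \<le> 1"
  shows "norm (u ^ n) \<le> 1"
  using order_trans[OF norm_power_ineq power_le_one[OF norm_ge_zero assms]] .

lemma summable_norm_sqrt_one_minus:
  fixes u :: "'a::{real_normed_algebra_1,banach}"
  assumes "norm u \<le> 1"
  shows "summable (\<lambda>n. norm (sqrt_coeff n *\<^sub>R u ^ n))"
proof (rule summable_comparison_test[OF _ summable_abs_sqrt_coeff], intro exI allI impI)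
  fix n
  have "norm (u ^ n) \<le> 1"
    by (rule norm_power_le_one[OF assms])
  then show "norm (norm (sqrt_coeff n *\<^sub>R u ^ n)) \<le> \<bar>sqrt_coeff n\<bar>"
    by (simp add: mult_left_le)
qed

lemma summable_sqrt_one_minus:
  fixes u :: "'a::{real_normed_algebra_1,banach}"
  assumes "norm u \<le> 1"
  shows "summable (\<lambda>n. sqrt_coeff n *\<^sub>R u ^ n)"
  using summable_norm_cancel[OF summable_norm_sqrt_one_minus[OF assms]] .

lemma sqrt_one_minus_square:
  fixes u :: "'a::{real_normed_algebra_1,banach}"
  assumes "norm u \<le> 1"
  shows "sqrt_one_minus u * sqrt_one_minus u = 1 - u"
proof -
  have "sqrt_one_minus u * sqrt_one_minus u
      = (\<Sum>k. \<Sum>i\<le>k. (sqrt_coeff i *\<^sub>R u ^ i) * (sqrt_coeff (k - i) *\<^sub>R u ^ (k - i)))"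
    unfolding sqrt_one_minus_def
    by (rule Cauchy_product[OF summable_norm_sqrt_one_minus[OF assms] summable_norm_sqrt_one_minus[OF assms]])
  also have "\<dots> = (\<Sum>k. ((-1)^k * of_nat (1 choose k)) *\<^sub>R u ^ k)"
  proof (rule suminf_cong)
    fix k
    have "(\<Sum>i\<le>k. (sqrt_coeff i *\<^sub>R u ^ i) * (sqrt_coeff (k - i) *\<^sub>R u ^ (k - i)))
        = (\<Sum>i\<le>k. (sqrt_coeff i * sqrt_coeff (k - i)) *\<^sub>R u ^ k)"
      by (intro sum.cong refl) (simp flip: power_add)
    then show "(\<Sum>i\<le>k. (sqrt_coeff i *\<^sub>R u ^ i) * (sqrt_coeff (k - i) *\<^sub>R u ^ (k - i)))
        = ((-1)^k * of_nat (1 choose k)) *\<^sub>R u ^ k"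
      by (simp add: sqrt_coeff_convolution flip: scaleR_sum_left)
  qed
  also have "\<dots> = (\<Sum>k\<in>{0,1}. ((-1)^k * of_nat (1 choose k)) *\<^sub>R u ^ k)"
    by (rule suminf_finite) auto
  also have "\<dots> = 1 - u" by simp
  finally show ?thesis .
qed

lemma norm_one_minus_sqrt_one_minus_le:
  fixes u :: "'a::{real_normed_algebra_1,banach}"
  assumes "norm u \<le> 1"
  shows "norm (1 - sqrt_one_minus u) \<le> 1"
proof -
  let ?f = "\<lambda>n. sqrt_coeff (Suc n) *\<^sub>R u ^ Suc n"
  have summable: "summable (\<lambda>n. norm (?f n))"
    using summable_norm_sqrt_one_minus[OF assms] by (subst summable_Suc_iff)
  have "norm (1 - sqrt_one_minus u) = norm (\<Sum>n. ?f n)"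
    unfolding sqrt_one_minus_def using suminf_split_head[OF summable_sqrt_one_minus[OF assms]]
    by (simp add: norm_minus_commute)
  also have "\<dots> \<le> (\<Sum>n. norm (?f n))"
    by (rule summable_norm[OF summable])
  also have "\<dots> \<le> (\<Sum>n. \<bar>sqrt_coeff (Suc n)\<bar>)"
  proof (rule suminf_le[OF _ summable])
    fix n
    have "norm (u ^ Suc n) \<le> 1"
      by (rule norm_power_le_one[OF assms])
    then show "norm (?f n) \<le> \<bar>sqrt_coeff (Suc n)\<bar>"
      by (simp add: mult_left_le)
  qed (subst summable_Suc_iff, rule summable_abs_sqrt_coeff)
  also have "\<dots> \<le> 1" by (rule suminf_abs_sqrt_coeff_Suc_le)
  finally show ?thesis .
qed

lemma sqrt_one_minus_real_nonneg:
  fixes \<tau> :: real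
  assumes "\<bar>\<tau>\<bar> \<le> 1"
  shows "sqrt_one_minus \<tau> \<ge> 0"
  using norm_one_minus_sqrt_one_minus_le[of \<tau>] assms by simp

lemma sqrt_one_minus_commute:
  fixes u y :: "'a::{real_normed_algebra_1,banach}"
  assumes "norm u \<le> 1" "y * u = u * y"
  shows "y * sqrt_one_minus u = sqrt_one_minus u * y"
proof -
  have "y * u ^ n = u ^ n * y" for n
    by (induction n) (simp_all, metis assms(2) mult.assoc)
  then show ?thesis
    unfolding sqrt_one_minus_def
    using suminf_mult[OF summable_sqrt_one_minus[OF assms(1)], of y]
      suminf_mult2[OF summable_sqrt_one_minus[OF assms(1)], of y]
    by simp
qed

lemma cstar_sqrt_one_minus:
  fixes u :: "'a::cstar_algebra_1"
  assumes "norm u \<le> 1"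
  shows "cstar (sqrt_one_minus u) = sqrt_one_minus (cstar u)"
  unfolding sqrt_one_minus_def using cstar_suminf[OF summable_sqrt_one_minus[OF assms]]
  by (simp add: cstar_scaleR cstar_power)

lemma centerD: "c \<in> center \<Longrightarrow> c * b = b * c"
  by (simp add: center_def)

lemma center_scaleR: "c \<in> center \<Longrightarrow> r *\<^sub>R c \<in> center"
  by (simp add: center_def)

lemma center_minus: "c \<in> center \<Longrightarrow> - c \<in> center"
  by (simp add: center_def)

lemma center_mult:
  assumes "a \<in> center" "b \<in> center"
  shows "a * b \<in> center"
proof -
  have "a * b * c = c * (a * b)" for c
  proof -
    have "a * b * c = (a * c) * b"
      by (simp add: mult.assoc centerD[OF assms(2)])
    also have "\<dots> = c * (a * b)"
      using centerD[OF assms(1), of c] by (simp add: mult.assoc)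
    finally show ?thesis .
  qed
  then show ?thesis
    by (simp add: center_def)
qed

lemma center_add: "a \<in> center \<Longrightarrow> b \<in> center \<Longrightarrow> a + b \<in> center"
  by (simp add: center_def algebra_simps)

lemma center_diff: "a \<in> center \<Longrightarrow> b \<in> center \<Longrightarrow> a - b \<in> center"
  by (simp add: center_def algebra_simps)

lemma center_cscale: "a \<in> center \<Longrightarrow> cscale c a \<in> center"
  by (simp add: center_def cscale_mult_left cscale_mult_right)

lemma center_cstar:
  assumes "c \<in> center"
  shows "cstar c \<in> center"
proof -
  have "cstar c * b = b * cstar c" for b :: 'a
    using arg_cong[OF centerD[OF assms, of "cstar b"], of cstar] by (simp add: cstar_mult cstar_cstar)
  then show ?thesis
    by (simp add: center_def)
qed

lemma center_sqrt_one_minus: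
  assumes "c \<in> center" "norm c \<le> 1"
  shows "sqrt_one_minus c \<in> center"
  using sqrt_one_minus_commute[OF assms(2)] centerD[OF assms(1)] by (simp add: center_def)

context
  fixes C :: "'a::cstar_algebra_1 set"
  assumes C: "unital_cstar_subalgebra C"
begin

lemma subalgebra_one: "1 \<in> C"
  and subalgebra_closed: "closed C"
  and subalgebra_add: "a \<in> C \<Longrightarrow> b \<in> C \<Longrightarrow> a + b \<in> C"
  and subalgebra_mult: "a \<in> C \<Longrightarrow> b \<in> C \<Longrightarrow> a * b \<in> C"
  and subalgebra_cscale: "a \<in> C \<Longrightarrow> cscale c a \<in> C"
  and subalgebra_cstar: "a \<in> C \<Longrightarrow> cstar a \<in> C"
  using C by (simp_all add: unital_cstar_subalgebra_def)

lemma subalgebra_scaleR: "a \<in> C \<Longrightarrow> r *\<^sub>R a \<in> C"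
  using subalgebra_cscale[of a "of_real r"] by (simp add: cscale_of_real)

lemma subalgebra_zero: "0 \<in> C"
  using subalgebra_scaleR[OF subalgebra_one, of 0] by simp

lemma subalgebra_diff: "a \<in> C \<Longrightarrow> b \<in> C \<Longrightarrow> a - b \<in> C"
  using subalgebra_add[of a "(-1) *\<^sub>R b"] subalgebra_scaleR[of b "-1"] by simp

lemma subalgebra_power: "a \<in> C \<Longrightarrow> a ^ n \<in> C"
  by (induction n) (simp_all add: subalgebra_one subalgebra_mult)

lemma subalgebra_sum: "(\<And>i. i \<in> A \<Longrightarrow> f i \<in> C) \<Longrightarrow> sum f A \<in> C"
  by (induction A rule: infinite_finite_induct) (simp_all add: subalgebra_zero subalgebra_add)

lemma suminf_in_subalgebra:
  assumes "summable f" "\<And>n. f n \<in> C"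
  shows "suminf f \<in> C"
  by (rule Lim_in_closed_set[OF subalgebra_closed _ _ summable_LIMSEQ[OF assms(1)]])
     (simp_all add: subalgebra_sum assms(2))

lemma subalgebra_sqrt_one_minus:
  assumes "u \<in> C" "norm u \<le> 1"
  shows "sqrt_one_minus u \<in> C"
  unfolding sqrt_one_minus_def
  by (rule suminf_in_subalgebra[OF summable_sqrt_one_minus[OF assms(2)]])
     (simp add: subalgebra_scaleR subalgebra_power assms(1))

context
  fixes x :: "'a \<Rightarrow> complex"
  assumes x: "x \<in> Omega C"
begin

lemma character_add: "a \<in> C \<Longrightarrow> b \<in> C \<Longrightarrow> x (a + b) = x a + x b"
  and character_mult: "a \<in> C \<Longrightarrow> b \<in> C \<Longrightarrow> x (a * b) = x a * x b"
  and character_cscale: "a \<in> C \<Longrightarrow> x (cscale c a) = c * x a"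
  and character_one: "x 1 = 1"
  and character_outside: "a \<notin> C \<Longrightarrow> x a = 0"
  using x by (simp_all add: Omega_def)

lemma character_scaleR: "a \<in> C \<Longrightarrow> x (r *\<^sub>R a) = of_real r * x a"
  using character_cscale[of a "of_real r"] by (simp add: cscale_of_real)

lemma character_zero: "x 0 = 0"
  using character_scaleR[OF subalgebra_zero, of 0] by simp

lemma character_diff: "a \<in> C \<Longrightarrow> b \<in> C \<Longrightarrow> x (a - b) = x a - x b"
  using character_add[of a "(-1) *\<^sub>R b"] character_scaleR[of b "-1"] subalgebra_scaleR[of b "-1"]
  by simp

lemma character_power: "a \<in> C \<Longrightarrow> x (a ^ n) = x a ^ n"
  by (induction n) (simp_all add: character_one character_mult subalgebra_power)

lemma character_sum: "(\<And>i. i \<in> A \<Longrightarrow> f i \<in> C) \<Longrightarrow> x (sum f A) = (\<Sum>i\<in>A. x (f i))"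
  by (induction A rule: infinite_finite_induct)
     (simp_all add: character_zero character_add subalgebra_sum)

text \<open>If \<open>\<bar>x a\<bar> > \<parallel>a\<parallel>\<close>, then \<open>b = a / x a\<close> has norm \<open>< 1\<close>, so \<open>1 - b\<close> is invertible in \<open>C\<close>
  by the Neumann series although \<open>x (1 - b) = 0\<close>.\<close>

lemma norm_character_le:
  assumes a: "a \<in> C"
  shows "cmod (x a) \<le> norm a"
proof (rule ccontr)
  assume "\<not> cmod (x a) \<le> norm a"
  then have less: "norm a < cmod (x a)" and "x a \<noteq> 0"
    by auto
  define b where "b = cscale (1 / x a) a"
  have bC: "b \<in> C"
    by (simp add: b_def subalgebra_cscale a)
  have "norm b < 1"
    using less \<open>x a \<noteq> 0\<close> by (simp add: b_def norm_cscale norm_divide field_simps)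
  have xb: "x b = 1"
    using \<open>x a \<noteq> 0\<close> by (simp add: b_def character_cscale a)
  have "(\<Sum>n. b ^ n) \<in> C"
    by (rule suminf_in_subalgebra[OF complete_algebra_summable_geometric[OF \<open>norm b < 1\<close>]])
       (rule subalgebra_power[OF bC])
  then have "x ((1 - b) * (\<Sum>n. b ^ n)) = 0"
    using character_mult character_diff subalgebra_diff subalgebra_one bC xb character_one
    by simp
  then show False
    using one_minus_mult_suminf_power[OF \<open>norm b < 1\<close>] character_one by simp
qed

lemma character_sums:
  assumes "summable f" "\<And>n. f n \<in> C"
  shows "(\<lambda>n. x (f n)) sums x (suminf f)"
proof -
  have sC: "suminf f \<in> C"
    by (rule suminf_in_subalgebra[OF assms])
  have partial_sums_C: "(\<Sum>i<n. f i) \<in> C" for n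
    by (simp add: subalgebra_sum assms(2))
  have lim: "(\<lambda>n. norm ((\<Sum>i<n. f i) - suminf f)) \<longlonglongrightarrow> 0"
    by (rule tendsto_norm_zero[OF LIM_zero[OF summable_LIMSEQ[OF assms(1)]]])
  have bound: "\<forall>n. norm (x (\<Sum>i<n. f i) - x (suminf f)) \<le> norm ((\<Sum>i<n. f i) - suminf f)"
    using norm_character_le[OF subalgebra_diff[OF partial_sums_C sC]] character_diff[OF partial_sums_C sC]
    by metis
  have "(\<lambda>n. x (\<Sum>i<n. f i) - x (suminf f)) \<longlonglongrightarrow> 0"
    by (rule Lim_null_comparison[OF always_eventually[OF bound] lim])
  then have "(\<lambda>n. x (\<Sum>i<n. f i)) \<longlonglongrightarrow> x (suminf f)"
    by (rule LIM_zero_cancel)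
  then show ?thesis
    by (simp add: sums_def character_sum assms(2))
qed

lemma character_sqrt_one_minus:
  assumes u: "u \<in> C" "norm u \<le> 1" and xu: "x u = of_real \<tau>" and \<tau>: "\<bar>\<tau>\<bar> \<le> 1"
  shows "x (sqrt_one_minus u) = of_real (sqrt_one_minus \<tau>)"
proof -
  have "(\<lambda>n. x (sqrt_coeff n *\<^sub>R u ^ n)) sums x (sqrt_one_minus u)"
    unfolding sqrt_one_minus_def
    by (rule character_sums[OF summable_sqrt_one_minus[OF u(2)]])
       (simp add: subalgebra_scaleR subalgebra_power u(1))
  moreover have "(\<lambda>n. x (sqrt_coeff n *\<^sub>R u ^ n)) = (\<lambda>n. of_real (sqrt_coeff n *\<^sub>R \<tau> ^ n))"
    by (simp add: character_scaleR character_power subalgebra_power u(1) xu)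
  moreover have "(\<lambda>n. of_real (sqrt_coeff n *\<^sub>R \<tau> ^ n)) sums (of_real (sqrt_one_minus \<tau>) :: complex)"
    unfolding sqrt_one_minus_def
    by (rule sums_of_real[OF summable_sums[OF summable_sqrt_one_minus]]) (simp add: \<tau>)
  ultimately show ?thesis
    using sums_unique2 by metis
qed

lemma J_ideal_sum: "finite A \<Longrightarrow> (\<And>i. i \<in> A \<Longrightarrow> f i \<in> J_ideal C x) \<Longrightarrow> sum f A \<in> J_ideal C x"
  by (auto simp: J_ideal_def subalgebra_sum character_sum)

lemma J_ideal_cstar_mult_self: "a \<in> J_ideal C x \<Longrightarrow> cstar a * a \<in> J_ideal C x"
  by (simp add: J_ideal_def subalgebra_mult subalgebra_cstar character_mult)

lemma character_shift_in_J_ideal: "c \<in> C \<Longrightarrow> c - cscale (x c) 1 \<in> J_ideal C x"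
  by (simp add: J_ideal_def subalgebra_diff subalgebra_cscale subalgebra_one character_diff
      character_cscale character_one)

end

end

lemma state_add: "is_state \<phi> \<Longrightarrow> \<phi> (a + b) = \<phi> a + \<phi> b"
  and state_cscale: "is_state \<phi> \<Longrightarrow> \<phi> (cscale c a) = c * \<phi> a"
  and state_one: "is_state \<phi> \<Longrightarrow> \<phi> 1 = 1"
  and state_Im_positive: "is_state \<phi> \<Longrightarrow> Im (\<phi> (cstar a * a)) = 0"
  and state_Re_positive: "is_state \<phi> \<Longrightarrow> Re (\<phi> (cstar a * a)) \<ge> 0"
  by (simp_all add: is_state_def)

lemma state_scaleR: "is_state \<phi> \<Longrightarrow> \<phi> (r *\<^sub>R a) = of_real r * \<phi> a"
  using state_cscale[of \<phi> "of_real r" a] by (simp add: cscale_of_real)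

lemma state_zero: "is_state \<phi> \<Longrightarrow> \<phi> 0 = 0"
  using state_scaleR[of \<phi> 0 0] by simp

lemma state_minus: "is_state \<phi> \<Longrightarrow> \<phi> (- a) = - \<phi> a"
  using state_scaleR[of \<phi> "-1" a] by simp

lemma state_diff: "is_state \<phi> \<Longrightarrow> \<phi> (a - b) = \<phi> a - \<phi> b"
  using state_add[of \<phi> a "- b"] state_minus[of \<phi> b] by simp

lemma state_sum: "is_state \<phi> \<Longrightarrow> \<phi> (sum f A) = (\<Sum>i\<in>A. \<phi> (f i))"
  by (induction A rule: infinite_finite_induct) (auto simp: state_add state_zero)

lemma state_positive: "is_state \<phi> \<Longrightarrow> \<phi> (cstar a * a) = of_real (Re (\<phi> (cstar a * a)))"
  using state_Im_positive[of \<phi> a] by (simp add: complex_eq_iff)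

text \<open>Polarization: \<open>h = p\<^sup>2 - q\<^sup>2\<close> with self-adjoint \<open>p = (h + 1)/2\<close>, \<open>q = (h - 1)/2\<close>.\<close>

lemma state_selfadjoint_real:
  fixes h :: "'a::cstar_algebra_1"
  assumes "is_state \<phi>" "cstar h = h"
  shows "Im (\<phi> h) = 0"
proof -
  define p where "p = (1/2::real) *\<^sub>R (h + 1)"
  define q where "q = (1/2::real) *\<^sub>R (h - 1)"
  have selfadjoint: "cstar p = p" "cstar q = q"
    using assms(2) by (simp_all add: p_def q_def cstar_scaleR cstar_add cstar_diff)
  have "(h + 1) * (h + 1) - (h - 1) * (h - 1) = h + h + h + h"
    by (simp add: algebra_simps)
  also have "\<dots> = (1 + 1 + 1 + 1::real) *\<^sub>R h"
    by (simp only: scaleR_add_left scaleR_one)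
  finally have "p * p - q * q = ((1/2::real) * (1/2)) *\<^sub>R ((1 + 1 + 1 + 1::real) *\<^sub>R h)"
    unfolding p_def q_def by (simp only: mult_scaleR_left mult_scaleR_right scaleR_scaleR
        flip: scaleR_diff_right)
  then have "p * p - q * q = h"
    by simp
  then have "\<phi> h = \<phi> (cstar p * p) - \<phi> (cstar q * q)"
    using state_diff[OF assms(1)] selfadjoint by metis
  then show ?thesis
    using state_Im_positive[OF assms(1)] by simp
qed

lemma state_cstar:
  fixes a :: "'a::cstar_algebra_1"
  assumes "is_state \<phi>"
  shows "\<phi> (cstar a) = cnj (\<phi> a)"
proof -
  have "cstar (a + cstar a) = a + cstar a"
    by (simp add: cstar_add cstar_cstar add.commute)
  then have "Im (\<phi> a + \<phi> (cstar a)) = 0"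
    using state_selfadjoint_real[OF assms] state_add[OF assms] by metis
  moreover have "cstar (cscale \<i> (a - cstar a)) = cscale \<i> (a - cstar a)"
    by (simp add: cstar_cscale cstar_diff cstar_cstar cscale_diff_right cscale_minus_left)
  then have "Im (\<phi> (cscale \<i> (a - cstar a))) = 0"
    by (rule state_selfadjoint_real[OF assms])
  then have "Re (\<phi> a - \<phi> (cstar a)) = 0"
    by (simp add: state_cscale[OF assms] state_diff[OF assms])
  ultimately show ?thesis
    by (simp add: complex_eq_iff)
qed

lemma state_Cauchy_Schwarz:
  fixes a :: "'a::cstar_algebra_1"
  assumes "is_state \<phi>"
  shows "cmod (\<phi> a) ^ 2 \<le> Re (\<phi> (cstar a * a))"
proof -
  define l where "l = \<phi> a"
  define b where "b = a - cscale l 1"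
  have "cstar b * b = cstar a * a - cscale l (cstar a) - cscale (cnj l) a + cscale (cnj l * l) 1"
    by (simp add: b_def cstar_diff cstar_cscale algebra_simps cscale_mult_left cscale_mult_right
        cscale_cscale mult.commute cscale_diff_right)
  then have "\<phi> (cstar b * b) = \<phi> (cstar a * a) - l * cnj l"
    using assms by (simp add: state_add state_diff state_cscale state_one state_cstar l_def)
  then have "Re (\<phi> (cstar b * b)) = Re (\<phi> (cstar a * a)) - cmod l ^ 2"
    by (simp add: complex_mult_cnj cmod_power2)
  then show ?thesis
    using state_Re_positive[OF assms, of b] by (simp add: l_def)
qed

lemma state_selfadjoint_Re_le_1:
  fixes h :: "'a::cstar_algebra_1"
  assumes "is_state \<phi>" "cstar h = h" "norm h \<le> 1"
  shows "Re (\<phi> h) \<le> 1"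
proof -
  let ?s = "sqrt_one_minus h"
  have "1 - h = cstar ?s * ?s"
    using cstar_sqrt_one_minus[OF assms(3)] sqrt_one_minus_square[OF assms(3)] assms(2) by simp
  then have "Re (\<phi> (1 - h)) \<ge> 0"
    using state_Re_positive[OF assms(1)] by metis
  then show ?thesis
    using assms(1) by (simp add: state_diff state_one)
qed

lemma norm_state_selfadjoint_le:
  fixes h :: "'a::cstar_algebra_1"
  assumes "is_state \<phi>" "cstar h = h"
  shows "cmod (\<phi> h) \<le> norm h"
proof (cases "h = 0")
  case True
  then show ?thesis
    using state_zero[OF assms(1)] by simp
next
  case False
  define h' where "h' = (1 / norm h) *\<^sub>R h"
  have "norm h' \<le> 1" "norm (- h') \<le> 1" "cstar h' = h'" "cstar (- h') = - h'"
    using False assms(2) by (simp_all add: h'_def cstar_scaleR cstar_minus)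
  then have "Re (\<phi> h') \<le> 1" "Re (\<phi> (- h')) \<le> 1" "Im (\<phi> h') = 0"
    using state_selfadjoint_Re_le_1[OF assms(1)] state_selfadjoint_real[OF assms(1)] by blast+
  then have "cmod (\<phi> h') \<le> 1"
    using state_minus[OF assms(1)] by (simp add: cmod_def abs_le_iff)
  then show ?thesis
    using False by (simp add: h'_def state_scaleR[OF assms(1)] norm_divide divide_le_eq)
qed

lemma norm_state_le:
  fixes a :: "'a::cstar_algebra_1"
  assumes "is_state \<phi>"
  shows "cmod (\<phi> a) \<le> 2 * norm a"
proof -
  obtain h k where a: "a = h + cscale \<i> k" "cstar h = h" "cstar k = k" "norm h \<le> norm a" "norm k \<le> norm a"
    using selfadjoint_decomposition[of a] by blast
  then have "\<phi> a = \<phi> h + \<i> * \<phi> k"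
    using assms by (simp add: state_add state_cscale)
  then have "cmod (\<phi> a) \<le> cmod (\<phi> h) + cmod (\<phi> k)"
    by (metis norm_triangle_ineq mult_1 norm_ii norm_mult)
  also have "\<dots> \<le> norm h + norm k"
    using norm_state_selfadjoint_le[OF assms a(2)] norm_state_selfadjoint_le[OF assms a(3)] by simp
  finally show ?thesis
    using a by simp
qed

lemma state_reweight:
  fixes s :: "'a::cstar_algebra_1"
  assumes state: "is_state \<phi>" and s: "s \<in> center" and pos: "Re (\<phi> (cstar s * s)) > 0"
  shows "is_state (\<lambda>a. \<phi> (cstar s * s * a) / \<phi> (cstar s * s))"
proof -
  let ?g = "cstar s * s"
  have g_real: "\<phi> ?g = of_real (Re (\<phi> ?g))"
    by (rule state_positive[OF state])
  have "?g * (cstar a * a) = cstar (s * a) * (s * a)" for a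
  proof -
    have "?g * (cstar a * a) = (cstar a * ?g) * a"
      by (simp only: mult.assoc[symmetric] centerD[OF center_mult[OF center_cstar[OF s] s]])
    then show ?thesis
      by (simp add: cstar_mult mult.assoc)
  qed
  then have g_positive: "\<phi> (?g * (cstar a * a)) = of_real (Re (\<phi> (cstar (s * a) * (s * a))))" for a
    using state_positive[OF state] by metis
  show ?thesis
    unfolding is_state_def
  proof (intro conjI allI)
    fix a b
    show "\<phi> (?g * (a + b)) / \<phi> ?g = \<phi> (?g * a) / \<phi> ?g + \<phi> (?g * b) / \<phi> ?g"
      by (simp add: distrib_left state_add[OF state] add_divide_distrib)
  next
    fix c a
    show "\<phi> (?g * cscale c a) / \<phi> ?g = c * (\<phi> (?g * a) / \<phi> ?g)"
      by (simp add: cscale_mult_right state_cscale[OF state])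
  next
    fix a
    show "Im (\<phi> (?g * (cstar a * a)) / \<phi> ?g) = 0"
      by (subst g_positive, subst g_real) (simp only: of_real_divide[symmetric] Im_complex_of_real)
    show "Re (\<phi> (?g * (cstar a * a)) / \<phi> ?g) \<ge> 0"
      using state_Re_positive[OF state, of "s * a"] pos
      by (subst g_positive, subst g_real, simp only: of_real_divide[symmetric] Re_complex_of_real, simp)
  next
    show "\<phi> (?g * 1) / \<phi> ?g = 1"
      using pos by auto
  qed
qed

lemma KMS_states_is_state: "\<phi> \<in> KMS_states \<sigma> \<beta> \<Longrightarrow> is_state \<phi>"
  by (simp add: KMS_states_def)

lemma KMS_states_at_subset: "KMS_states_at \<sigma> \<beta> C x \<subseteq> KMS_states \<sigma> \<beta>"
  by (auto simp: KMS_states_at_def)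

text \<open>The weight commutes with everything, in particular with \<open>\<sigma>\<^sub>i\<^sub>\<beta>(b)\<close>, so the KMS condition
  survives.\<close>

lemma KMS_states_reweight:
  fixes s :: "'a::cstar_algebra_1"
  assumes \<phi>: "\<phi> \<in> KMS_states \<sigma> \<beta>" and s: "s \<in> center"
    and pos: "Re (\<phi> (cstar s * s)) > 0"
  shows "(\<lambda>a. \<phi> (cstar s * s * a) / \<phi> (cstar s * s)) \<in> KMS_states \<sigma> \<beta>"
proof -
  let ?g = "cstar s * s"
  have g_commute: "?g * b = b * ?g" for b
    by (rule centerD[OF center_mult[OF center_cstar[OF s] s]])
  have "\<phi> (?g * (a * F (\<i> * complex_of_real \<beta>))) = \<phi> (?g * (b * a))"
    if "analytic_extension \<sigma> b F" for a b F
  proof -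
    have "\<phi> (?g * a * F (\<i> * complex_of_real \<beta>)) = \<phi> (b * (?g * a))"
      using \<phi> that unfolding KMS_states_def by blast
    moreover have "b * (?g * a) = ?g * (b * a)"
      using mult.assoc[of b ?g a] mult.assoc[of ?g b a] g_commute[of b] by simp
    ultimately show ?thesis
      by (simp add: mult.assoc)
  qed
  then show ?thesis
    using state_reweight[OF KMS_states_is_state[OF \<phi>] s pos] by (simp add: KMS_states_def)
qed

lemma continuous_on_apply [continuous_intros]: "continuous_on S (\<lambda>f. f i :: 'b::topological_space)"
  by (rule continuous_on_subset[OF continuous_on_product_coordinates]) simp

lemma closed_KMS_states: "closed (KMS_states (\<sigma> :: real \<Rightarrow> 'a::cstar_algebra_1 \<Rightarrow> 'a) \<beta>)"
  unfolding KMS_states_def is_state_def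
  by (intro closed_Collect_conj closed_Collect_all closed_Collect_imp open_Collect_const
      closed_Collect_eq closed_Collect_le continuous_intros)

lemma closed_KMS_states_at: "closed (KMS_states_at (\<sigma> :: real \<Rightarrow> 'a::cstar_algebra_1 \<Rightarrow> 'a) \<beta> C x)"
proof -
  have "KMS_states_at \<sigma> \<beta> C x = KMS_states \<sigma> \<beta> \<inter> (\<Inter>a\<in>J_ideal C x. {\<phi>. \<phi> a = 0})"
    by (auto simp: KMS_states_at_def)
  also have "closed \<dots>"
    by (intro closed_Int closed_KMS_states closed_INT ballI closed_Collect_eq continuous_intros)
  finally show ?thesis .
qed

text \<open>Tychonoff: states lie in the product of the discs of radius \<open>2 \<parallel>a\<parallel>\<close>.\<close>

lemma compact_KMS_states: "compact (KMS_states (\<sigma> :: real \<Rightarrow> 'a::cstar_algebra_1 \<Rightarrow> 'a) \<beta>)"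
proof -
  let ?box = "PiE UNIV (\<lambda>a::'a. cball (0::complex) (2 * norm a))"
  have "compactin (product_topology (\<lambda>_. euclidean) UNIV) ?box"
    by (subst compactin_PiE) auto
  then have "compact ?box"
    by (simp add: euclidean_product_topology)
  moreover have "KMS_states \<sigma> \<beta> \<subseteq> ?box"
    using norm_state_le[OF KMS_states_is_state] by (auto simp: PiE_iff dist_norm)
  ultimately show ?thesis
    using compact_Int_closed[OF _ closed_KMS_states[of \<sigma> \<beta>], of ?box] by (simp add: Int_absorb1)
qed

lemma compact_KMS_states_at: "compact (KMS_states_at (\<sigma> :: real \<Rightarrow> 'a::cstar_algebra_1 \<Rightarrow> 'a) \<beta> C x)"
  using compact_Int_closed[OF compact_KMS_states closed_KMS_states_at, of \<sigma> \<beta> \<sigma> \<beta> C x]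
    KMS_states_at_subset[of \<sigma> \<beta> C x]
  by (simp add: Int_absorb1)

section \<open>Extreme points of compact sets of functionals\<close>

abbreviation convex_comb :: "real \<Rightarrow> ('a \<Rightarrow> complex) \<Rightarrow> ('a \<Rightarrow> complex) \<Rightarrow> 'a \<Rightarrow> complex" where
  "convex_comb t \<psi>1 \<psi>2 \<equiv> \<lambda>a. complex_of_real t * \<psi>1 a + complex_of_real (1 - t) * \<psi>2 a"

definition extreme_subset :: "('a \<Rightarrow> complex) set \<Rightarrow> ('a \<Rightarrow> complex) set \<Rightarrow> bool" where
  "extreme_subset K F \<longleftrightarrow> F \<subseteq> K \<and>
    (\<forall>\<psi>1\<in>K. \<forall>\<psi>2\<in>K. \<forall>t. 0 < t \<and> t < 1 \<and> convex_comb t \<psi>1 \<psi>2 \<in> F \<longrightarrow> \<psi>1 \<in> F \<and> \<psi>2 \<in> F)"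

lemma convex_comb_same: "convex_comb t \<psi> \<psi> = \<psi>"
  by (simp add: fun_eq_iff algebra_simps)

lemma extreme_subsetD:
  "extreme_subset K F \<Longrightarrow> \<psi>1 \<in> K \<Longrightarrow> \<psi>2 \<in> K \<Longrightarrow> 0 < t \<Longrightarrow> t < 1 \<Longrightarrow>
    convex_comb t \<psi>1 \<psi>2 \<in> F \<Longrightarrow> \<psi>1 \<in> F \<and> \<psi>2 \<in> F"
  unfolding extreme_subset_def by blast

lemma extreme_subset_subset: "extreme_subset K F \<Longrightarrow> F \<subseteq> K"
  by (simp add: extreme_subset_def)

lemma ExtI:
  assumes "\<phi> \<in> K"
    and "\<And>\<psi>1 \<psi>2 t. \<psi>1 \<in> K \<Longrightarrow> \<psi>2 \<in> K \<Longrightarrow> 0 < t \<Longrightarrow> t < 1 \<Longrightarrow> \<phi> = convex_comb t \<psi>1 \<psi>2 \<Longrightarrow> \<psi>1 = \<psi>2"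
  shows "\<phi> \<in> Ext K"
  using assms unfolding Ext_def by auto

lemma ExtD:
  "\<phi> \<in> Ext K \<Longrightarrow> \<psi>1 \<in> K \<Longrightarrow> \<psi>2 \<in> K \<Longrightarrow> 0 < t \<Longrightarrow> t < 1 \<Longrightarrow> \<phi> = convex_comb t \<psi>1 \<psi>2 \<Longrightarrow> \<psi>1 = \<psi>2"
  unfolding Ext_def by blast

lemma Ext_subset: "Ext K \<subseteq> K"
  by (auto simp: Ext_def)

lemma Ext_restrict: "\<phi> \<in> Ext K \<Longrightarrow> \<phi> \<in> F \<Longrightarrow> F \<subseteq> K \<Longrightarrow> \<phi> \<in> Ext F"
  by (auto intro!: ExtI dest: ExtD)

lemma Ext_extreme_subset:
  assumes "extreme_subset K F"
  shows "Ext F \<subseteq> Ext K"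
proof
  fix \<phi> assume \<phi>: "\<phi> \<in> Ext F"
  show "\<phi> \<in> Ext K"
  proof (rule ExtI)
    show "\<phi> \<in> K"
      using \<phi> Ext_subset assms by (auto simp: extreme_subset_def)
  next
    fix \<psi>1 \<psi>2 t
    assume "\<psi>1 \<in> K" "\<psi>2 \<in> K" "0 < t" "t < 1" "\<phi> = convex_comb t \<psi>1 \<psi>2"
    moreover from this have "\<psi>1 \<in> F" "\<psi>2 \<in> F"
      using extreme_subsetD[OF assms] \<phi> Ext_subset by blast+
    ultimately show "\<psi>1 = \<psi>2"
      using ExtD[OF \<phi>] by blast
  qed
qed

lemma extreme_subset_Inter:
  fixes K :: "('a \<Rightarrow> complex) set"
  assumes K: "compact K" and "\<C> \<noteq> {}"
    and \<C>: "\<And>F. F \<in> \<C> \<Longrightarrow> extreme_subset K F \<and> closed F \<and> F \<noteq> {}"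
    and chain: "\<And>X Y. X \<in> \<C> \<Longrightarrow> Y \<in> \<C> \<Longrightarrow> X \<subseteq> Y \<or> Y \<subseteq> X"
  shows "extreme_subset K (\<Inter>\<C>) \<and> closed (\<Inter>\<C>) \<and> \<Inter>\<C> \<noteq> {}"
proof (intro conjI)
  obtain F where F: "F \<in> \<C>" "F \<subseteq> K" "F \<noteq> {}"
    using \<open>\<C> \<noteq> {}\<close> \<C> extreme_subset_subset by blast
  show "extreme_subset K (\<Inter>\<C>)"
    unfolding extreme_subset_def
  proof (intro conjI ballI allI impI)
    show "\<Inter>\<C> \<subseteq> K"
      using F by blast
  next
    fix \<psi>1 \<psi>2 t
    assume "\<psi>1 \<in> K" "\<psi>2 \<in> K" "0 < t \<and> t < 1 \<and> convex_comb t \<psi>1 \<psi>2 \<in> \<Inter>\<C>"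
    then have "\<psi>1 \<in> F \<and> \<psi>2 \<in> F" if "F \<in> \<C>" for F
      using \<C>[OF that] that by (intro extreme_subsetD[of K F]) auto
    then show "\<psi>1 \<in> \<Inter>\<C>" "\<psi>2 \<in> \<Inter>\<C>"
      by blast+
  qed
  show "closed (\<Inter>\<C>)"
    using \<C> by blast
  have "K \<inter> \<Inter>\<C> \<noteq> {}"
  proof (rule compact_imp_fip[OF K])
    show "closed F" if "F \<in> \<C>" for F
      using \<C>[OF that] by blast
  next
    fix \<F> assume \<F>: "finite \<F>" "\<F> \<subseteq> \<C>"
    show "K \<inter> \<Inter>\<F> \<noteq> {}"
    proof (cases "\<F> = {}")
      case True
      then show ?thesis
        using F by auto
    next
      case False
      moreover have "subset.chain \<C> \<F>"
        using \<F>(2) chain by (auto simp: subset_chain_def)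
      ultimately have "\<Inter>\<F> \<in> \<F>"
        using Inter_in_chain[OF \<F>(1)] by blast
      then have "\<Inter>\<F> \<in> \<C>"
        using \<F>(2) by blast
      then show ?thesis
        using \<C> extreme_subset_subset by blast
    qed
  qed
  then show "\<Inter>\<C> \<noteq> {}"
    by blast
qed

lemma convex_comb_nonneg_eq_0:
  fixes t x y :: real
  assumes "0 < t" "t < 1" "0 \<le> x" "0 \<le> y" "t * x + (1 - t) * y = 0"
  shows "x = 0" "y = 0"
  using assms by (simp_all add: add_nonneg_eq_0_iff)

lemma extreme_subset_argmax:
  fixes K :: "('a \<Rightarrow> complex) set" and c :: complex and a :: 'a
  assumes F: "extreme_subset K F" "closed F" "F \<noteq> {}" and K: "compact K"
  defines "f \<equiv> \<lambda>\<psi>. Re (c * \<psi> a)"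
  obtains m where "extreme_subset K {\<psi>\<in>F. f \<psi> = m}" "closed {\<psi>\<in>F. f \<psi> = m}" "{\<psi>\<in>F. f \<psi> = m} \<noteq> {}"
proof -
  have "F \<subseteq> K"
    using F(1) by (rule extreme_subset_subset)
  then have "compact F"
    using compact_Int_closed[OF K F(2)] by (simp add: Int_absorb1)
  moreover have cont: "continuous_on UNIV f"
    unfolding f_def by (intro continuous_intros)
  ultimately obtain \<psi>0 where \<psi>0: "\<psi>0 \<in> F" "\<And>\<psi>. \<psi> \<in> F \<Longrightarrow> f \<psi> \<le> f \<psi>0"
    using continuous_attains_sup[OF _ F(3) continuous_on_subset[OF cont subset_UNIV]] by blast
  define m where "m = f \<psi>0"
  have "extreme_subset K {\<psi>\<in>F. f \<psi> = m}"
    unfolding extreme_subset_def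
  proof (intro conjI ballI allI impI)
    show "{\<psi> \<in> F. f \<psi> = m} \<subseteq> K"
      using \<open>F \<subseteq> K\<close> by blast
  next
    fix \<psi>1 \<psi>2 t
    assume "\<psi>1 \<in> K" "\<psi>2 \<in> K" and t: "0 < t \<and> t < 1 \<and> convex_comb t \<psi>1 \<psi>2 \<in> {\<psi> \<in> F. f \<psi> = m}"
    then have in_F: "\<psi>1 \<in> F \<and> \<psi>2 \<in> F"
      by (intro extreme_subsetD[OF F(1), of \<psi>1 \<psi>2 t]) simp_all
    then have "m - f \<psi>1 \<ge> 0" "m - f \<psi>2 \<ge> 0"
      using \<psi>0(2)[of \<psi>1] \<psi>0(2)[of \<psi>2] by (simp_all add: m_def)
    moreover have "t * (m - f \<psi>1) + (1 - t) * (m - f \<psi>2) = 0"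
      using t by (simp add: f_def algebra_simps)
    ultimately have "f \<psi>1 = m \<and> f \<psi>2 = m"
      using convex_comb_nonneg_eq_0 t by (metis eq_iff_diff_eq_0)
    then show "\<psi>1 \<in> {\<psi> \<in> F. f \<psi> = m}" "\<psi>2 \<in> {\<psi> \<in> F. f \<psi> = m}"
      using in_F by simp_all
  qed
  moreover have "closed {\<psi>\<in>F. f \<psi> = m}"
    using closed_Int[OF F(2) closed_Collect_eq[OF cont continuous_on_const, of m]]
    by (simp add: Collect_conj_eq)
  moreover have "{\<psi>\<in>F. f \<psi> = m} \<noteq> {}"
    using \<psi>0(1) m_def by blast
  ultimately show ?thesis
    using that by blast
qed

lemma Zorn_Lemma_Inter:
  assumes "A \<noteq> {}" and chain: "\<And>\<C>. \<C> \<in> chains A \<Longrightarrow> \<C> \<noteq> {} \<Longrightarrow> \<Inter>\<C> \<in> A"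
  shows "\<exists>M\<in>A. \<forall>X\<in>A. X \<subseteq> M \<longrightarrow> X = M"
proof -
  have bound: "\<exists>U\<in>uminus ` A. \<forall>X\<in>\<C>. X \<subseteq> U" if \<C>: "\<C> \<in> chains (uminus ` A)" for \<C>
  proof (cases "\<C> = {}")
    case True
    then show ?thesis
      using assms(1) by blast
  next
    case False
    have "uminus ` \<C> \<subseteq> A"
      using image_mono[OF chainsD2[OF \<C>], of uminus] by (simp add: image_image)
    moreover have "X \<subseteq> Y \<or> Y \<subseteq> X" if XY: "X \<in> uminus ` \<C>" "Y \<in> uminus ` \<C>" for X Y
    proof -
      obtain X' Y' where "X' \<in> \<C>" "Y' \<in> \<C>" "X = - X'" "Y = - Y'"
        using XY by blast
      then show ?thesis
        using chainsD[OF \<C>, of X' Y'] by auto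
    qed
    ultimately have "uminus ` \<C> \<in> chains A"
      by (simp add: chains_def chain_subset_def)
    then have "\<Inter>(uminus ` \<C>) \<in> A"
      using chain False by blast
    then have "- \<Inter>(uminus ` \<C>) \<in> uminus ` A"
      by (rule imageI)
    moreover have "X \<subseteq> - \<Inter>(uminus ` \<C>)" if "X \<in> \<C>" for X
      using that by blast
    ultimately show ?thesis
      by blast
  qed
  obtain M where M: "M \<in> uminus ` A" "\<forall>X\<in>uminus ` A. M \<subseteq> X \<longrightarrow> X = M"
    using Zorn_Lemma2[OF ballI[OF bound]] by blast
  have "X = - M" if "X \<in> A" "X \<subseteq> - M" for X
  proof -
    have "- X \<in> uminus ` A"
      using that(1) by (rule imageI)
    moreover have "M \<subseteq> - X"
      using that(2) by blast
    ultimately have "- X = M"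
      using M(2) by blast
    then show ?thesis
      by blast
  qed
  moreover have "- M \<in> A"
    using M(1) by auto
  ultimately show ?thesis
    by blast
qed

lemma minimal_extreme_subset:
  fixes K :: "('a \<Rightarrow> complex) set"
  assumes K: "compact K" "closed K" "K \<noteq> {}"
  obtains F0 where "extreme_subset K F0" "closed F0" "F0 \<noteq> {}"
    "\<And>F. extreme_subset K F \<Longrightarrow> closed F \<Longrightarrow> F \<noteq> {} \<Longrightarrow> F \<subseteq> F0 \<Longrightarrow> F = F0"
proof -
  define A where "A = {F. extreme_subset K F \<and> closed F \<and> F \<noteq> {}}"
  have "K \<in> A"
    using K by (simp add: A_def extreme_subset_def)
  then have "A \<noteq> {}"
    by blast
  have inter: "\<Inter>\<C> \<in> A" if \<C>: "\<C> \<in> chains A" "\<C> \<noteq> {}" for \<C>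
  proof -
    have members: "extreme_subset K F \<and> closed F \<and> F \<noteq> {}" if "F \<in> \<C>" for F
      using chainsD2[OF \<C>(1)] that by (simp add: A_def subset_iff)
    have "extreme_subset K (\<Inter>\<C>) \<and> closed (\<Inter>\<C>) \<and> \<Inter>\<C> \<noteq> {}"
      by (rule extreme_subset_Inter[OF K(1) \<C>(2) members chainsD[OF \<C>(1)]])
    then show ?thesis
      by (simp add: A_def)
  qed
  obtain F0 where F0: "F0 \<in> A" "\<forall>F\<in>A. F \<subseteq> F0 \<longrightarrow> F = F0"
    using Zorn_Lemma_Inter[OF \<open>A \<noteq> {}\<close> inter] by blast
  show ?thesis
  proof (rule that)
    show "extreme_subset K F0" "closed F0" "F0 \<noteq> {}"
      using F0(1) by (simp_all add: A_def)
    show "F = F0" if "extreme_subset K F" "closed F" "F \<noteq> {}" "F \<subseteq> F0" for F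
      using F0(2) that by (simp add: A_def)
  qed
qed

lemma Ext_nonempty:
  fixes K :: "('a \<Rightarrow> complex) set"
  assumes K: "compact K" "closed K" "K \<noteq> {}"
  shows "Ext K \<noteq> {}"
proof -
  obtain F0 where F0: "extreme_subset K F0" "closed F0" "F0 \<noteq> {}"
    and minimal: "\<And>F. extreme_subset K F \<Longrightarrow> closed F \<Longrightarrow> F \<noteq> {} \<Longrightarrow> F \<subseteq> F0 \<Longrightarrow> F = F0"
    using minimal_extreme_subset[OF K] by blast
  have level: "Re (c * \<psi>1 a) = Re (c * \<psi>2 a)" if "\<psi>1 \<in> F0" "\<psi>2 \<in> F0" for c a \<psi>1 \<psi>2
  proof -
    obtain m where "extreme_subset K {\<psi>\<in>F0. Re (c * \<psi> a) = m}"
      "closed {\<psi>\<in>F0. Re (c * \<psi> a) = m}" "{\<psi>\<in>F0. Re (c * \<psi> a) = m} \<noteq> {}"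
      using extreme_subset_argmax[OF F0 K(1)] by blast
    then have "{\<psi>\<in>F0. Re (c * \<psi> a) = m} = F0"
      using minimal[of "{\<psi>\<in>F0. Re (c * \<psi> a) = m}"] by blast
    then have "Re (c * \<psi> a) = m" if "\<psi> \<in> F0" for \<psi>
      using that by (metis (mono_tags, lifting) mem_Collect_eq)
    then show ?thesis
      using that by simp
  qed
  have singleton: "\<psi>1 = \<psi>2" if "\<psi>1 \<in> F0" "\<psi>2 \<in> F0" for \<psi>1 \<psi>2
  proof
    fix a
    show "\<psi>1 a = \<psi>2 a"
      using level[OF that, of 1 a] level[OF that, of "- \<i>" a] by (simp add: complex_eq_iff)
  qed
  obtain \<phi> where "\<phi> \<in> F0"
    using F0(3) by blast
  then have "\<phi> \<in> Ext F0"
    by (rule ExtI) (erule (1) singleton)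
  then show ?thesis
    using Ext_extreme_subset[OF F0(1)] by blast
qed

section \<open>Extreme KMS states are multiplicative on the center\<close>

text \<open>The weights \<open>1 \<plusminus> h\<close> are of the form \<open>s\<^sup>* s\<close> with \<open>s\<close> a binomial square root.\<close>

lemma KMS_states_central_split:
  fixes h :: "'a::cstar_algebra_1"
  assumes \<phi>: "\<phi> \<in> KMS_states \<sigma> \<beta>" and h: "h \<in> center" "cstar h = h" "norm h < 1"
  obtains t \<psi>1 \<psi>2 where "0 < t" "t < 1" "\<psi>1 \<in> KMS_states \<sigma> \<beta>" "\<psi>2 \<in> KMS_states \<sigma> \<beta>"
    "\<phi> = convex_comb t \<psi>1 \<psi>2" "\<phi> h = of_real (2 * t - 1)"
    "\<And>b. \<phi> b + \<phi> (h * b) = of_real (2 * t) * \<psi>1 b"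
proof -
  define t where "t = (1 + Re (\<phi> h)) / 2"
  define \<psi>1 where "\<psi>1 = (\<lambda>a. \<phi> ((1 + h) * a) / \<phi> (1 + h))"
  define \<psi>2 where "\<psi>2 = (\<lambda>a. \<phi> ((1 - h) * a) / \<phi> (1 - h))"
  have state: "is_state \<phi>"
    using \<phi> by (rule KMS_states_is_state)
  have "Im (\<phi> h) = 0"
    by (rule state_selfadjoint_real[OF state h(2)])
  then have \<phi>h: "\<phi> h = of_real (2 * t - 1)"
    by (simp add: t_def complex_eq_iff field_simps)
  have "\<bar>Re (\<phi> h)\<bar> < 1"
    using norm_state_selfadjoint_le[OF state h(2)] abs_Re_le_cmod[of "\<phi> h"] h(3) by linarith
  then have t: "0 < t" "t < 1"
    by (auto simp: t_def)
  have weights: "\<phi> (1 + h) = of_real (2 * t)" "\<phi> (1 - h) = of_real (2 * (1 - t))"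
    by (simp_all add: state_add[OF state] state_diff[OF state] state_one[OF state] \<phi>h)
  have sqrt_weight: "(\<lambda>a. \<phi> ((1 - u) * a) / \<phi> (1 - u)) \<in> KMS_states \<sigma> \<beta>"
    if "u \<in> center" "cstar u = u" "norm u \<le> 1" "Re (\<phi> (1 - u)) > 0" for u
  proof -
    let ?s = "sqrt_one_minus u"
    have "cstar ?s * ?s = 1 - u"
      using cstar_sqrt_one_minus[OF that(3)] sqrt_one_minus_square[OF that(3)] that(2) by simp
    then show ?thesis
      using KMS_states_reweight[OF \<phi> center_sqrt_one_minus[OF that(1,3)]] that(4) by simp
  qed
  have \<psi>1: "\<psi>1 \<in> KMS_states \<sigma> \<beta>"
    using sqrt_weight[of "- h"] h t weights by (simp add: \<psi>1_def center_minus cstar_minus)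
  have \<psi>2: "\<psi>2 \<in> KMS_states \<sigma> \<beta>"
    using sqrt_weight[of h] h t weights by (simp add: \<psi>2_def)
  have cancel: "of_real r * (z / of_real (2 * r)) = z / 2" if "r \<noteq> 0" for r :: real and z :: complex
    using that by simp
  have half: "of_real t * \<psi>1 a = (\<phi> a + \<phi> (h * a)) / 2"
    "of_real (1 - t) * \<psi>2 a = (\<phi> a - \<phi> (h * a)) / 2" for a
    using t unfolding \<psi>1_def \<psi>2_def weights
    by (simp_all only: cancel) (simp_all add: distrib_right left_diff_distrib state_add[OF state]
        state_diff[OF state])
  have split: "\<phi> = convex_comb t \<psi>1 \<psi>2"
    by (simp only: fun_eq_iff half) (simp add: field_simps)
  have "\<phi> a + \<phi> (h * a) = of_real (2 * t) * \<psi>1 a" for a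
    using half(1)[of a] by (simp add: algebra_simps)
  from that[OF t \<psi>1 \<psi>2 split \<phi>h this] show ?thesis .
qed

lemma Ext_KMS_states_mult_selfadjoint_central:
  fixes h :: "'a::cstar_algebra_1"
  assumes ext: "\<phi> \<in> Ext (KMS_states \<sigma> \<beta>)" and h: "h \<in> center" "cstar h = h"
  shows "\<phi> (h * a) = \<phi> h * \<phi> a"
proof -
  have \<phi>: "\<phi> \<in> KMS_states \<sigma> \<beta>"
    using ext Ext_subset by blast
  have state: "is_state \<phi>"
    using \<phi> by (rule KMS_states_is_state)
  have small: "\<phi> (g * a) = \<phi> g * \<phi> a" if g: "g \<in> center" "cstar g = g" "norm g < 1" for g
  proof -
    obtain t \<psi>1 \<psi>2 where t: "0 < t" "t < 1" and \<psi>: "\<psi>1 \<in> KMS_states \<sigma> \<beta>" "\<psi>2 \<in> KMS_states \<sigma> \<beta>"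
      and split: "\<phi> = convex_comb t \<psi>1 \<psi>2" and \<phi>g: "\<phi> g = of_real (2 * t - 1)"
      and \<psi>1: "\<And>b. \<phi> b + \<phi> (g * b) = of_real (2 * t) * \<psi>1 b"
      using KMS_states_central_split[OF \<phi> g] by blast
    have "\<psi>1 = \<psi>2"
      by (rule ExtD[OF ext \<psi> t split])
    then have "\<psi>1 = \<phi>"
      using split by (simp only: convex_comb_same)
    then have "\<phi> a + \<phi> (g * a) = of_real (2 * t) * \<phi> a"
      using \<psi>1[of a] by (simp only:)
    then have "\<phi> (g * a) = of_real (2 * t) * \<phi> a - \<phi> a"
      by (metis add_diff_cancel_left')
    also have "\<dots> = \<phi> g * \<phi> a"
      unfolding \<phi>g by (simp add: algebra_simps)
    finally show ?thesis .
  qed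
  show ?thesis
  proof (cases "h = 0")
    case True
    then show ?thesis
      using state_zero[OF state] by simp
  next
    case False
    define g where "g = (1 / (2 * norm h)) *\<^sub>R h"
    have "g \<in> center" "cstar g = g" "norm g < 1"
      using h False by (simp_all add: g_def center_scaleR cstar_scaleR)
    then have "\<phi> (g * a) = \<phi> g * \<phi> a"
      by (rule small)
    then show ?thesis
      using False by (simp add: g_def state_scaleR[OF state])
  qed
qed

lemma Ext_KMS_states_mult_central:
  fixes c :: "'a::cstar_algebra_1"
  assumes ext: "\<phi> \<in> Ext (KMS_states \<sigma> \<beta>)" and c: "c \<in> center"
  shows "\<phi> (c * a) = \<phi> c * \<phi> a"
proof -
  have state: "is_state \<phi>"
    using ext Ext_subset KMS_states_is_state by blast
  obtain h k where hk: "c = h + cscale \<i> k" "cstar h = h" "cstar k = k"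
    and central: "h \<in> center" "k \<in> center"
  proof
    show "c = (1/2::real) *\<^sub>R (c + cstar c) + cscale \<i> (cscale (- \<i> / 2) (c - cstar c))"
      "cstar ((1/2::real) *\<^sub>R (c + cstar c)) = (1/2::real) *\<^sub>R (c + cstar c)"
      "cstar (cscale (- \<i> / 2) (c - cstar c)) = cscale (- \<i> / 2) (c - cstar c)"
      by (rule selfadjoint_decomposition)+
    show "(1/2::real) *\<^sub>R (c + cstar c) \<in> center" "cscale (- \<i> / 2) (c - cstar c) \<in> center"
      by (intro center_scaleR center_cscale center_add center_diff center_cstar c)+
  qed
  have "\<phi> (c * a) = \<phi> (h * a) + \<i> * \<phi> (k * a)"
    by (subst hk(1)) (simp add: distrib_right cscale_mult_left state_add[OF state] state_cscale[OF state])
  also have "\<dots> = (\<phi> h + \<i> * \<phi> k) * \<phi> a"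
    using Ext_KMS_states_mult_selfadjoint_central[OF ext central(1) hk(2)]
      Ext_KMS_states_mult_selfadjoint_central[OF ext central(2) hk(3)]
    by (simp add: algebra_simps)
  also have "\<phi> h + \<i> * \<phi> k = \<phi> c"
    by (subst hk(1)) (simp add: state_add[OF state] state_cscale[OF state])
  finally show ?thesis .
qed

lemma KMS_states_at_eq_character:
  assumes C: "unital_cstar_subalgebra C" and x: "x \<in> Omega C"
    and \<phi>: "\<phi> \<in> KMS_states_at \<sigma> \<beta> C x" and c: "c \<in> C"
  shows "\<phi> c = x c"
proof -
  have state: "is_state \<phi>"
    using \<phi> KMS_states_at_subset KMS_states_is_state by blast
  have "\<phi> (c - cscale (x c) 1) = 0"
    using \<phi> character_shift_in_J_ideal[OF C x c] by (simp add: KMS_states_at_def)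
  then show ?thesis
    by (simp add: state_diff[OF state] state_cscale[OF state] state_one[OF state])
qed

lemma KMS_states_at_unique_character:
  assumes C: "unital_cstar_subalgebra C" and x: "x \<in> Omega C" and y: "y \<in> Omega C"
    and \<phi>: "\<phi> \<in> KMS_states_at \<sigma> \<beta> C x" "\<phi> \<in> KMS_states_at \<sigma> \<beta> C y"
  shows "x = y"
proof
  fix c
  show "x c = y c"
  proof (cases "c \<in> C")
    case True
    then show ?thesis
      using KMS_states_at_eq_character[OF C x \<phi>(1)] KMS_states_at_eq_character[OF C y \<phi>(2)] by simp
  next
    case False
    then show ?thesis
      using character_outside[OF C x] character_outside[OF C y] by simp
  qed
qed

text \<open>\<open>K\<^sub>\<beta>\<^sup>x\<close> is a face: a convex combination annihilates \<open>a\<^sup>* a\<close> only if both states do,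
  and by Cauchy-Schwarz a state annihilating \<open>a\<^sup>* a\<close> annihilates \<open>a\<close>.\<close>

lemma extreme_subset_KMS_states_at:
  assumes C: "unital_cstar_subalgebra C" and x: "x \<in> Omega C"
  shows "extreme_subset (KMS_states \<sigma> \<beta>) (KMS_states_at \<sigma> \<beta> C x)"
  unfolding extreme_subset_def
proof (intro conjI ballI allI impI KMS_states_at_subset)
  fix \<psi>1 \<psi>2 t
  assume \<psi>: "\<psi>1 \<in> KMS_states \<sigma> \<beta>" "\<psi>2 \<in> KMS_states \<sigma> \<beta>"
    and "0 < t \<and> t < 1 \<and> convex_comb t \<psi>1 \<psi>2 \<in> KMS_states_at \<sigma> \<beta> C x"
  then have t: "0 < t" "t < 1" and comb: "convex_comb t \<psi>1 \<psi>2 \<in> KMS_states_at \<sigma> \<beta> C x"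
    by simp_all
  have states: "is_state \<psi>1" "is_state \<psi>2"
    using \<psi> by (simp_all add: KMS_states_is_state)
  have "\<psi>1 a = 0 \<and> \<psi>2 a = 0" if a: "a \<in> J_ideal C x" for a
  proof -
    have "convex_comb t \<psi>1 \<psi>2 (cstar a * a) = 0"
      using comb J_ideal_cstar_mult_self[OF C x a] by (simp add: KMS_states_at_def)
    then have "Re (convex_comb t \<psi>1 \<psi>2 (cstar a * a)) = 0"
      by simp
    then have "t * Re (\<psi>1 (cstar a * a)) + (1 - t) * Re (\<psi>2 (cstar a * a)) = 0"
      by simp
    moreover have "Re (\<psi>1 (cstar a * a)) \<ge> 0" "Re (\<psi>2 (cstar a * a)) \<ge> 0"
      using states by (simp_all add: state_Re_positive)
    ultimately have "Re (\<psi>1 (cstar a * a)) = 0" "Re (\<psi>2 (cstar a * a)) = 0"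
      using convex_comb_nonneg_eq_0[OF t] by blast+
    then show ?thesis
      using state_Cauchy_Schwarz[OF states(1), of a] state_Cauchy_Schwarz[OF states(2), of a] by simp
  qed
  then show "\<psi>1 \<in> KMS_states_at \<sigma> \<beta> C x" "\<psi>2 \<in> KMS_states_at \<sigma> \<beta> C x"
    using \<psi> by (simp_all add: KMS_states_at_def)
qed

lemma Ext_KMS_states_imp_Ext_KMS_states_at:
  assumes C: "unital_cstar_subalgebra C" "C \<subseteq> center" and ext: "\<phi> \<in> Ext (KMS_states \<sigma> \<beta>)"
  shows "\<exists>x\<in>Omega C. \<phi> \<in> Ext (KMS_states_at \<sigma> \<beta> C x)"
proof -
  have \<phi>: "\<phi> \<in> KMS_states \<sigma> \<beta>"
    using ext Ext_subset by blast
  have state: "is_state \<phi>"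
    using \<phi> by (rule KMS_states_is_state)
  define x where "x a = (if a \<in> C then \<phi> a else 0)" for a
  have "x \<in> Omega C"
    unfolding Omega_def
  proof (intro CollectI conjI ballI allI impI)
    fix a b assume "a \<in> C" "b \<in> C"
    then show "x (a + b) = x a + x b" "x (a * b) = x a * x b"
      using Ext_KMS_states_mult_central[OF ext] C
      by (auto simp: x_def subalgebra_add subalgebra_mult state_add[OF state])
  next
    fix c a assume "a \<in> C"
    then show "x (cscale c a) = c * x a"
      using C(1) by (simp add: x_def subalgebra_cscale state_cscale[OF state])
  qed (use C(1) in \<open>simp_all add: x_def subalgebra_one state_one[OF state]\<close>)
  moreover have "\<phi> \<in> KMS_states_at \<sigma> \<beta> C x"
    using \<phi> by (simp add: KMS_states_at_def J_ideal_def x_def)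
  ultimately show ?thesis
    using Ext_restrict[OF ext _ KMS_states_at_subset] by blast
qed

section \<open>A faithful KMS state forces every \<open>K\<^sub>\<beta>\<^sup>x\<close> to be nonempty\<close>

lemma norm_one_minus_square_le:
  fixes a :: "'a::cstar_algebra_1"
  assumes "cstar a = a" "norm a \<le> 1"
  shows "norm (1 - a * a) \<le> 1"
proof -
  have na: "norm (a * a) \<le> 1"
    using norm_mult_ineq[of a a] assms(2) by (meson mult_le_one norm_ge_zero order_trans)
  define c where "c = sqrt_one_minus (a * a)"
  have cc: "c * c = 1 - a * a"
    using sqrt_one_minus_square[OF na] by (simp add: c_def)
  have cs: "cstar c = c"
    using cstar_sqrt_one_minus[OF na] assms(1) by (simp add: c_def cstar_mult)
  have ac: "a * c = c * a"
    unfolding c_def by (rule sqrt_one_minus_commute[OF na]) (simp add: mult.assoc)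
  define v where "v = a + cscale \<i> c"
  have cv: "cstar v = a - cscale \<i> c"
    using assms(1) cs by (simp add: v_def cstar_add cstar_cscale cscale_minus_left)
  txt \<open>\<open>v = a + i c\<close> is unitary, so \<open>\<parallel>c\<parallel> = \<parallel>(v - v\<^sup>*)/2i\<parallel> \<le> 1\<close>.\<close>
  have "cstar v * v = a * a + c * c + cscale \<i> (a * c - c * a)"
    unfolding cv unfolding v_def
    by (simp add: algebra_simps cscale_mult_left cscale_mult_right cscale_cscale cscale_diff_right
        cscale_minus_left)
  then have "cstar v * v = 1"
    using cc ac by simp
  then have "norm v = 1"
    using cstar_identity[of v] norm_ge_zero[of v] by (auto simp: power2_eq_1_iff)
  moreover have "v - cstar v = cscale (2 * \<i>) c"
    unfolding cv unfolding v_def by (simp add: cscale_add_left[symmetric] algebra_simps)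
  ultimately have "norm (cscale (2 * \<i>) c) \<le> 2"
    using norm_triangle_ineq4[of v "cstar v"] by simp
  then have "norm c \<le> 1"
    by (simp add: norm_cscale norm_mult)
  have "norm (1 - a * a) = norm c ^ 2"
    using cc cs cstar_identity[of c] by simp
  also have "\<dots> \<le> 1"
    using \<open>norm c \<le> 1\<close> by (simp add: power_le_one)
  finally show ?thesis .
qed

lemma subalgebra_abs_unit_ball:
  assumes C: "unital_cstar_subalgebra C" and x: "x \<in> Omega C"
    and a: "a \<in> C" "cstar a = a" "norm a \<le> 1" and xa: "x a = of_real \<rho>"
  obtains s where "s \<in> C" "cstar s = s" "s * s = a * a" "norm (1 - s) \<le> 1" "x s = of_real \<bar>\<rho>\<bar>"
proof
  define u where "u = 1 - a * a"
  define \<tau> where "\<tau> = 1 - \<rho>\<^sup>2"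
  have u: "u \<in> C" "cstar u = u" "norm u \<le> 1" "x u = of_real \<tau>"
    using a xa by (simp_all add: u_def \<tau>_def subalgebra_diff[OF C] subalgebra_one[OF C]
        subalgebra_mult[OF C] cstar_diff cstar_mult norm_one_minus_square_le
        character_diff[OF C x] character_one[OF C x] character_mult[OF C x] power2_eq_square)
  have "\<bar>\<rho>\<bar> \<le> 1"
    using norm_character_le[OF C x a(1)] a(3) xa by simp
  then have "\<rho>\<^sup>2 \<le> 1"
    by (simp only: abs_square_le_1)
  then have \<tau>: "\<bar>\<tau>\<bar> \<le> 1"
    by (simp add: \<tau>_def)
  show "sqrt_one_minus u \<in> C" "cstar (sqrt_one_minus u) = sqrt_one_minus u"
    "sqrt_one_minus u * sqrt_one_minus u = a * a" "norm (1 - sqrt_one_minus u) \<le> 1"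
    using u sqrt_one_minus_square[OF u(3)] cstar_sqrt_one_minus[OF u(3)]
    by (simp_all add: subalgebra_sqrt_one_minus[OF C] norm_one_minus_sqrt_one_minus_le u_def)
  have "sqrt_one_minus \<tau> = sqrt (sqrt_one_minus \<tau> * sqrt_one_minus \<tau>)"
    using sqrt_one_minus_real_nonneg[OF \<tau>] by simp
  also have "\<dots> = \<bar>\<rho>\<bar>"
    using sqrt_one_minus_square[of \<tau>] \<tau> by (simp add: \<tau>_def)
  finally show "x (sqrt_one_minus u) = of_real \<bar>\<rho>\<bar>"
    using character_sqrt_one_minus[OF C x u(1,3,4) \<tau>] by simp
qed

text \<open>\<open>k\<^sup>2\<close> is the absolute value of \<open>w\<close>: rescale \<open>w\<close> into the unit ball and take two binomial
  square roots.\<close>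

lemma subalgebra_abs:
  assumes C: "unital_cstar_subalgebra C" and x: "x \<in> Omega C"
    and w: "w \<in> C" "cstar w = w" and xw: "x w = of_real r"
  obtains k where "k \<in> C" "cstar k = k" "(k * k) * (k * k) = w * w" "x (k * k) = of_real \<bar>r\<bar>"
proof -
  define M where "M = norm w + 1"
  have M: "M > 0" "norm w \<le> M"
    using norm_ge_zero[of w] unfolding M_def by linarith+
  define a where "a = (1 / M) *\<^sub>R w"
  have "a \<in> C" "cstar a = a" "norm a \<le> 1" "x a = of_real (r / M)"
    using w M xw by (simp_all add: a_def subalgebra_scaleR[OF C] cstar_scaleR
        character_scaleR[OF C x] field_simps)
  then obtain s where s: "s \<in> C" "cstar s = s" "s * s = a * a" "norm (1 - s) \<le> 1"
    and xs: "x s = of_real \<bar>r / M\<bar>"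
    by (rule subalgebra_abs_unit_ball[OF C x])
  define k where "k = sqrt M *\<^sub>R sqrt_one_minus (1 - s)"
  have kk: "k * k = M *\<^sub>R s"
    using M(1) sqrt_one_minus_square[OF s(4)] by (simp add: k_def)
  show ?thesis
  proof (rule that)
    show "k \<in> C" "cstar k = k"
      using s cstar_sqrt_one_minus[OF s(4)]
      by (simp_all add: k_def subalgebra_scaleR[OF C] subalgebra_sqrt_one_minus[OF C]
          subalgebra_diff[OF C] subalgebra_one[OF C] cstar_scaleR cstar_diff)
    show "k * k * (k * k) = w * w"
      using M(1) s(3) by (simp add: kk a_def)
    show "x (k * k) = of_real \<bar>r\<bar>"
      using M(1) xs by (simp add: kk character_scaleR[OF C x s(1)] abs_divide abs_of_pos[OF M(1)])
  qed
qed

lemma add_square_mult_eq: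
  fixes w s :: "'a::ring"
  assumes "s * w = w * s" and "s * s = w * w"
  shows "(w + s) * (w + s) * w = s * ((w + s) * (w + s))"
proof -
  have "s * (w * y) = w * (s * y)" "s * (s * y) = w * (w * y)" for y
    using assms by (simp_all add: mult.assoc[symmetric])
  then show ?thesis
    using assms by (simp add: algebra_simps)
qed

text \<open>\<open>z = w + |w|\<close> is twice the positive part of \<open>w\<close>.\<close>

lemma subalgebra_positive_part:
  assumes C: "unital_cstar_subalgebra C" "C \<subseteq> center" and x: "x \<in> Omega C"
    and w: "w \<in> C" "cstar w = w" and xw: "x w = of_real e" and e: "e > 0"
  obtains z y where "z \<in> C" "cstar z = z" "x z \<noteq> 0" "z * z * w = cstar y * y"
proof -
  obtain k where k: "k \<in> C" "cstar k = k" "(k * k) * (k * k) = w * w" "x (k * k) = of_real \<bar>e\<bar>"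
    using subalgebra_abs[OF C(1) x w xw] by blast
  define s where "s = k * k"
  define z where "z = w + s"
  have sC: "s \<in> C"
    by (simp add: s_def subalgebra_mult[OF C(1) k(1) k(1)])
  have zC: "z \<in> C"
    by (simp add: z_def subalgebra_add[OF C(1) w(1) sC])
  show ?thesis
  proof (rule that[of z "k * z"])
    show "z \<in> C"
      by (rule zC)
    show "cstar z = z"
      using w(2) k(2) by (simp add: z_def s_def cstar_add cstar_mult)
    show "x z \<noteq> 0"
      using e k(4) xw by (simp add: z_def s_def character_add[OF C(1) x w(1) sC[unfolded s_def]])
    have "z * z * w = s * (z * z)"
      unfolding z_def by (rule add_square_mult_eq) (use centerD C(2) w(1) sC k(3) s_def in auto)
    also have "\<dots> = (z * k) * (k * z)"
      using centerD[OF subsetD[OF C(2) zC], of "k * k * z"] by (simp add: s_def mult.assoc)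
    also have "z * k = cstar (k * z)"
      using w(2) k(2) by (simp add: z_def s_def cstar_add cstar_mult)
    finally show "z * z * w = cstar (k * z) * (k * z)" .
  qed
qed

text \<open>Reweight \<open>\<phi>\<close> by \<open>z\<^sup>2\<close> with \<open>z\<close> the positive part of \<open>e - c\<close>: then \<open>\<psi>(e - c) \<ge> 0\<close>.\<close>

lemma KMS_states_small_on_kernel:
  assumes C: "unital_cstar_subalgebra C" "C \<subseteq> center" and x: "x \<in> Omega C"
    and \<phi>: "\<phi> \<in> KMS_states \<sigma> \<beta>" and faithful: "faithful_on C \<phi>"
    and c: "c \<in> C" "cstar c = c" "x c = 0" and e: "e > 0"
  shows "\<exists>\<psi>\<in>KMS_states \<sigma> \<beta>. Re (\<psi> c) \<le> e"
proof -
  have state: "is_state \<phi>"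
    using \<phi> by (rule KMS_states_is_state)
  define w where "w = e *\<^sub>R 1 - c"
  have w: "w \<in> C" "cstar w = w" "x w = of_real e"
    using c by (simp_all add: w_def subalgebra_diff[OF C(1)] subalgebra_scaleR[OF C(1)]
        subalgebra_one[OF C(1)] cstar_diff cstar_scaleR character_diff[OF C(1) x]
        character_scaleR[OF C(1) x] character_one[OF C(1) x])
  obtain z y where z: "z \<in> C" "cstar z = z" "x z \<noteq> 0" and zw: "z * z * w = cstar y * y"
    using subalgebra_positive_part[OF C x w e] by blast
  have "z \<noteq> 0"
    using z(3) character_zero[OF C(1) x] by auto
  then have "\<phi> (z * z) \<noteq> 0"
    using faithful z(1,2) unfolding faithful_on_def by metis
  then have pos: "Re (\<phi> (z * z)) > 0"
    using state_positive[OF state, of z] state_Re_positive[OF state, of z] z(2)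
    by (metis less_eq_real_def of_real_0)
  define \<psi> where "\<psi> = (\<lambda>a. \<phi> (z * z * a) / \<phi> (z * z))"
  have "\<psi> \<in> KMS_states \<sigma> \<beta>"
    using KMS_states_reweight[OF \<phi> subsetD[OF C(2) z(1)]] pos z(2) by (simp add: \<psi>_def)
  moreover have "Re (\<psi> c) \<le> e"
  proof -
    have "\<phi> (z * z * c) = of_real e * \<phi> (z * z) - \<phi> (cstar y * y)"
      unfolding zw[symmetric] by (simp add: w_def right_diff_distrib state_diff[OF state] state_scaleR[OF state])
    then have "\<psi> c = of_real e - \<phi> (cstar y * y) / \<phi> (z * z)"
      using pos by (auto simp: \<psi>_def diff_divide_distrib)
    also have "\<dots> = of_real (e - Re (\<phi> (cstar y * y)) / Re (\<phi> (z * z)))"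
      using state_positive[OF state, of y] state_positive[OF state, of z] z(2) by (metis of_real_diff of_real_divide)
    finally show ?thesis
      using state_Re_positive[OF state, of y] pos by simp
  qed
  ultimately show ?thesis
    by blast
qed

lemma KMS_states_small_on_finite:
  assumes C: "unital_cstar_subalgebra C" "C \<subseteq> center" and x: "x \<in> Omega C"
    and \<phi>: "\<phi> \<in> KMS_states \<sigma> \<beta>" and faithful: "faithful_on C \<phi>"
    and A: "finite A" "A \<subseteq> J_ideal C x" and e: "e > 0"
  shows "\<exists>\<psi>\<in>KMS_states \<sigma> \<beta>. \<forall>a\<in>A. cmod (\<psi> a) \<le> e"
proof -
  define c where "c = (\<Sum>a\<in>A. cstar a * a)"
  have "c \<in> J_ideal C x"
    unfolding c_def using J_ideal_cstar_mult_self[OF C(1) x] A by (intro J_ideal_sum[OF C(1) x]) auto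
  then have c: "c \<in> C" "x c = 0"
    by (simp_all add: J_ideal_def)
  have "cstar c = c"
    by (simp add: c_def cstar_sum cstar_mult cstar_cstar)
  moreover have "e\<^sup>2 > 0"
    using e by simp
  ultimately obtain \<psi> where \<psi>: "\<psi> \<in> KMS_states \<sigma> \<beta>" "Re (\<psi> c) \<le> e\<^sup>2"
    using KMS_states_small_on_kernel[OF C x \<phi> faithful c(1) _ c(2)] by blast
  have state: "is_state \<psi>"
    using \<psi>(1) by (rule KMS_states_is_state)
  have "cmod (\<psi> a) \<le> e" if a: "a \<in> A" for a
  proof -
    have "cmod (\<psi> a) ^ 2 \<le> Re (\<psi> (cstar a * a))"
      by (rule state_Cauchy_Schwarz[OF state])
    also have "\<dots> \<le> (\<Sum>b\<in>A. Re (\<psi> (cstar b * b)))"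
      by (rule member_le_sum[OF a _ A(1)]) (rule state_Re_positive[OF state])
    also have "\<dots> = Re (\<psi> c)"
      by (simp add: c_def state_sum[OF state] Re_sum)
    also have "\<dots> \<le> e\<^sup>2"
      by (rule \<psi>(2))
    finally show ?thesis
      by (rule power2_le_imp_le) (use e in simp)
  qed
  then show ?thesis
    using \<psi>(1) by blast
qed

lemma compact_vanishing:
  fixes K :: "('a \<Rightarrow> complex) set"
  assumes K: "compact K"
    and approx: "\<And>A e. finite A \<Longrightarrow> A \<subseteq> J \<Longrightarrow> e > 0 \<Longrightarrow> \<exists>\<psi>\<in>K. \<forall>a\<in>A. cmod (\<psi> a) \<le> e"
  shows "\<exists>\<psi>\<in>K. \<forall>a\<in>J. \<psi> a = 0"
proof -
  define T where "T p = {\<psi>. cmod (\<psi> (fst p)) \<le> snd p}" for p :: "'a \<times> real"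
  define I where "I = J \<times> {0::real<..}"
  have "K \<inter> \<Inter>(T ` I) \<noteq> {}"
  proof (rule compact_imp_fip[OF K])
    have "closed (T p)" for p
      unfolding T_def by (intro closed_Collect_le continuous_intros)
    then show "closed S" if "S \<in> T ` I" for S
      using that by blast
  next
    fix \<F> assume "finite \<F>" "\<F> \<subseteq> T ` I"
    then obtain I0 where I0: "I0 \<subseteq> I" "finite I0" "\<F> = T ` I0"
      using finite_subset_image[of \<F> T I] by blast
    define e where "e = Min (insert 1 (snd ` I0))"
    have "e > 0"
      using I0(1,2) unfolding e_def by (subst Min_gr_iff) (auto simp: I_def)
    moreover have "finite (fst ` I0)" "fst ` I0 \<subseteq> J"
      using I0(1,2) by (auto simp: I_def)
    ultimately obtain \<psi> where \<psi>: "\<psi> \<in> K" "\<And>a. a \<in> fst ` I0 \<Longrightarrow> cmod (\<psi> a) \<le> e"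
      using approx[of "fst ` I0" e] by blast
    have "\<psi> \<in> T p" if "p \<in> I0" for p
    proof -
      have "e \<le> snd p"
        unfolding e_def using I0(2) that by (intro Min_le) auto
      then show ?thesis
        using \<psi>(2)[of "fst p"] that by (simp add: T_def)
    qed
    then show "K \<inter> \<Inter>\<F> \<noteq> {}"
      using \<psi>(1) I0(3) by blast
  qed
  then obtain \<psi> where \<psi>: "\<psi> \<in> K" "\<And>p. p \<in> I \<Longrightarrow> \<psi> \<in> T p"
    by blast
  have "\<psi> a = 0" if "a \<in> J" for a
  proof -
    have "cmod (\<psi> a) \<le> 0 + e" if "e > 0" for e
      using \<psi>(2)[of "(a, e)"] \<open>a \<in> J\<close> that by (simp add: I_def T_def)
    then have "cmod (\<psi> a) \<le> 0"
      by (rule field_le_epsilon)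
    then show ?thesis
      by simp
  qed
  then show ?thesis
    using \<psi>(1) by blast
qed

lemma KMS_states_at_nonempty:
  assumes C: "unital_cstar_subalgebra C" "C \<subseteq> center" and x: "x \<in> Omega C"
    and \<phi>: "\<phi> \<in> KMS_states \<sigma> \<beta>" and faithful: "faithful_on C \<phi>"
  shows "KMS_states_at \<sigma> \<beta> C x \<noteq> {}"
  using compact_vanishing[OF compact_KMS_states KMS_states_small_on_finite[OF C x \<phi> faithful]]
  by (auto simp: KMS_states_at_def)

lemma disjoint_family_on_inj_choice:
  assumes disjoint: "disjoint_family_on A I" and nonempty: "\<And>i. i \<in> I \<Longrightarrow> A i \<noteq> {}"
  obtains f where "inj_on f I" "\<And>i. i \<in> I \<Longrightarrow> f i \<in> A i"
proof -
  have "\<forall>i\<in>I. \<exists>a. a \<in> A i"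
    using nonempty by blast
  from bchoice[OF this] obtain f where f: "\<forall>i\<in>I. f i \<in> A i"
    by blast
  have "inj_on f I"
  proof (rule inj_onI)
    fix i j assume i: "i \<in> I" and j: "j \<in> I" and "f i = f j"
    show "i = j"
    proof (rule ccontr)
      assume "i \<noteq> j"
      then have "A i \<inter> A j = {}"
        by (rule disjoint_family_onD[OF disjoint i j])
      moreover have "f i \<in> A i"
        using f i by blast
      moreover have "f i \<in> A j"
        using f j \<open>f i = f j\<close> by simp
      ultimately show False
        by blast
    qed
  qed
  then show ?thesis
    using that f by blast
qed

lemma Ext_KMS_states_eq_UN:
  assumes C: "unital_cstar_subalgebra C" "C \<subseteq> center"
  shows "Ext (KMS_states \<sigma> \<beta>) = (\<Union>x\<in>Omega C. Ext (KMS_states_at \<sigma> \<beta> C x))"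
proof
  show "Ext (KMS_states \<sigma> \<beta>) \<subseteq> (\<Union>x\<in>Omega C. Ext (KMS_states_at \<sigma> \<beta> C x))"
    using Ext_KMS_states_imp_Ext_KMS_states_at[OF C] by blast
  show "(\<Union>x\<in>Omega C. Ext (KMS_states_at \<sigma> \<beta> C x)) \<subseteq> Ext (KMS_states \<sigma> \<beta>)"
    using Ext_extreme_subset[OF extreme_subset_KMS_states_at[OF C(1)]] by (simp add: UN_subset_iff)
qed

lemma disjoint_family_Ext_KMS_states_at:
  assumes C: "unital_cstar_subalgebra C"
  shows "disjoint_family_on (\<lambda>x. Ext (KMS_states_at \<sigma> \<beta> C x)) (Omega C)"
  unfolding disjoint_family_on_def
proof (intro ballI impI)
  fix x y assume "x \<in> Omega C" "y \<in> Omega C" "x \<noteq> y"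
  then have "\<phi> \<notin> KMS_states_at \<sigma> \<beta> C x \<inter> KMS_states_at \<sigma> \<beta> C y" for \<phi>
    using KMS_states_at_unique_character[OF C, of x y \<phi>] by blast
  then show "Ext (KMS_states_at \<sigma> \<beta> C x) \<inter> Ext (KMS_states_at \<sigma> \<beta> C y) = {}"
    using Ext_subset by blast
qed

lemma Ext_KMS_states_at_nonempty:
  assumes C: "unital_cstar_subalgebra C" "C \<subseteq> center" and x: "x \<in> Omega C"
    and \<phi>: "\<phi> \<in> KMS_states \<sigma> \<beta>" and faithful: "faithful_on C \<phi>"
  shows "Ext (KMS_states_at \<sigma> \<beta> C x) \<noteq> {}"
  by (rule Ext_nonempty[OF compact_KMS_states_at closed_KMS_states_at
        KMS_states_at_nonempty[OF C x \<phi> faithful]])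

theorem theorem3p6:
  fixes \<sigma> :: "real \<Rightarrow> 'a::cstar_algebra_1 \<Rightarrow> 'a" and \<beta> :: real and C :: "'a set"
  assumes "is_flow \<sigma>"
    and "unital_cstar_subalgebra C"
    and "C \<subseteq> center"
  shows "Ext (KMS_states \<sigma> \<beta>) = (\<Union>x\<in>Omega C. Ext (KMS_states_at \<sigma> \<beta> C x))
     \<and> disjoint_family_on (\<lambda>x. Ext (KMS_states_at \<sigma> \<beta> C x)) (Omega C)
     \<and> ((\<exists>\<phi>\<in>KMS_states \<sigma> \<beta>. faithful_on C \<phi>) \<longrightarrow>
          (\<forall>x\<in>Omega C. KMS_states_at \<sigma> \<beta> C x \<noteq> {})
          \<and> (\<exists>f. inj_on f (Omega C) \<and> f ` Omega C \<subseteq> Ext (KMS_states \<sigma> \<beta>)))"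
proof (intro conjI impI)
  note C = assms(2,3)
  show "Ext (KMS_states \<sigma> \<beta>) = (\<Union>x\<in>Omega C. Ext (KMS_states_at \<sigma> \<beta> C x))"
    by (rule Ext_KMS_states_eq_UN[OF C])
  show disjoint: "disjoint_family_on (\<lambda>x. Ext (KMS_states_at \<sigma> \<beta> C x)) (Omega C)"
    by (rule disjoint_family_Ext_KMS_states_at[OF C(1)])
  assume "\<exists>\<phi>\<in>KMS_states \<sigma> \<beta>. faithful_on C \<phi>"
  then obtain \<phi> where \<phi>: "\<phi> \<in> KMS_states \<sigma> \<beta>" "faithful_on C \<phi>"
    by blast
  show "\<forall>x\<in>Omega C. KMS_states_at \<sigma> \<beta> C x \<noteq> {}"
    using KMS_states_at_nonempty[OF C _ \<phi>] by blast
  obtain f where "inj_on f (Omega C)" and f: "\<And>x. x \<in> Omega C \<Longrightarrow> f x \<in> Ext (KMS_states_at \<sigma> \<beta> C x)"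
    using disjoint_family_on_inj_choice[OF disjoint Ext_KMS_states_at_nonempty[OF C _ \<phi>]] by blast
  moreover have "f ` Omega C \<subseteq> Ext (KMS_states \<sigma> \<beta>)"
    unfolding Ext_KMS_states_eq_UN[OF C]
  proof (rule image_subsetI)
    fix x assume x: "x \<in> Omega C"
    show "f x \<in> (\<Union>x\<in>Omega C. Ext (KMS_states_at \<sigma> \<beta> C x))"
      using x f[OF x] by blast
  qed
  ultimately show "\<exists>f. inj_on f (Omega C) \<and> f ` Omega C \<subseteq> Ext (KMS_states \<sigma> \<beta>)"
    by blast
qed

end
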